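(* Let $P = u_1;\ldots;u_k$ ($k\ge 1$) be any PGLD program whose basic instructions are of the form $f.m$ with $f\in\mathrm{Foci}$, $m\in\mathrm{Meth}$. Let $t_P$ be the molecular dynamics state reached from the initial state $t_{\mathrm{init}}$ by executing the PGA program $\mathrm{pgldmd}(P)$, i.e. by applying $\mathrm{eff}$ successively for the methods of its instructions in order. Then $$|P|_{\mathrm{PGLD}} = \tau_{\mathrm{tau}}\big(|I| /_{\mathsf{md}} \mathrm{MDS}_{t_P}\big).$$
   Context: Threads. Let $A$ be a set of basic actions, $\tau\notin A$. Threads are built from $\mathsf S$ (termination), $\mathsf D$ (deadlock) and postconditional composition $x\unlhd a\unrhd y$ for $a\in A\cup\{\tau\}$ (perform $a$, then continue as $x$ if the reply is true, as $y$ if false); $a\circ x$ abbreviates $x\unlhd a\unrhd x$, and $x\unlhd\tau\unrhd y=\tau\circ x$. Threads are taken in the projective limit model: projections are $\pi_0(x)=\mathsf D$, $\pi_{n+1}(\mathsf S)=\mathsf S$, $\pi_{n+1}(\mathsf D)=\mathsf D$, $\pi_{n+1}(x\unlhd a\unrhd y)=\pi_n(x)\unlhd a\unrhd\pi_n(y)$; two threads are equal iff all their projections are equal; every guarded system of recursion equations has a unique solution. PGA. A PGA program is a finite, or eventually periodic infinite, sequence $v_1v_2\ldots$ (written with $;$ and $Y^\omega=Y;Y;\ldots$) of primitive instructions: basic instruction $a$, positive test $+a$, negative test $-a$, forward jump $\#l$ ($l\in\mathbb N$), termination $!$. Its behaviour $|X|$ is $T_1$ where: $T_i=\mathsf D$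 if $i$ exceeds the length; if $v_i=a$ then $T_i=a\circ T_{i+1}$; if $v_i=+a$ then $T_i=T_{i+1}\unlhd a\unrhd T_{i+2}$; if $v_i=-a$ then $T_i=T_{i+2}\unlhd a\unrhd T_{i+1}$; if $v_i=\#l$ then $T_i=T_{i+l}$ for $l>0$ and $T_i=\mathsf D$ for $l=0$; if $v_i=!$ then $T_i=\mathsf S$; and $T_i=\mathsf D$ whenever the chain of jumps starting at position $i$ is infinite. PGLD. A PGLD program $u_1;\ldots;u_k$ consists of instructions $a$, $+a$, $-a$ (as in PGA) and absolute jumps $\#\#l$ ($l\in\mathbb N$). Its behaviour is $|P|_{\mathrm{PGLD}}=|(\psi_1(u_1);\ldots;\psi_k(u_k);!;!)^\omega|$ where $\psi_j(\#\#l)=\#(l-j)$ if $j\le l\le k$, $\psi_j(\#\#l)=\#(k+2-(j-l))$ if $0<l<j$, $\psi_j(\#\#l)=!$ if $l=0$ or $l>k$, and $\psi_j(u)=u$ for non-jump $u$. Molecular dynamics. Fix a finite set $\mathrm{Spot}$ of spots with a total order $\le$; finite disjoint sets $\mathrm{Foci}$ (foci) and $\mathrm{Meth}$ (methods) with $\mathrm{Foci},\mathrm{Meth}\subseteq\mathrm{Spot}$; a finite set $\mathrm{Field}$ containing distinct fields $\mathsf{stop},\mathsf{ajmp},\mathsf{focus},\mathsf{method},\mathsf{pos},\mathsf{neg}$; an infinite countable set $\mathrm{PAtom}$ of proto-atoms, $\bot\notin\mathrm{PAtom}$, with a bijection $\mathrm{proatom}:\mathbb N_{\ge1}\to\mathrm{PAtom}$.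 The basic actions are $f.m$ ($f\in\mathrm{Foci},m\in\mathrm{Meth}$) and $\mathsf{md}.m$ for the molecular dynamics methods $m$ below, where $\mathsf{md}$ is a focus name not in $\mathrm{Foci}$. A state is $\uparrow$ or a pair $\langle\sigma,\alpha\rangle$ with $\sigma:\mathrm{Spot}\to\mathrm{PAtom}\cup\{\bot\}$, $\alpha$ a map from a finite set $\mathrm{dom}(\alpha)\subseteq\mathrm{PAtom}$ (the atoms) assigning to each atom $a$ a map $\alpha(a)$ from a finite set of fields to $\mathrm{PAtom}\cup\{\bot\}$, with all values of $\sigma$ and of each $\alpha(a)$ in $\mathrm{dom}(\alpha)\cup\{\bot\}$. $t_{\mathrm{init}}$ is the state with $\mathrm{dom}(\alpha)=\emptyset$ (so $\sigma\equiv\bot$). For each method $m$ and state $t$ there is a new state $\mathrm{eff}(m,t)$ and a yield $\mathrm{yld}(m,t)\in\{T,F,M,B\}$; unless stated, the state is unchanged. In state $\langle\sigma,\alpha\rangle$ (with $s,s'\in\mathrm{Spot}$, $v\in\mathrm{Field}$; "$v$ is a field of $s$" means $\sigma(s)\ne\bot$ and $v\in\mathrm{dom}(\alpha(\sigma(s)))$): $\mathsf{create}(s)$: with $a=\mathrm{proatom}(n+1)$, $n=\max\{n' : \mathrm{proatom}(n')\in\mathrm{dom}(\alpha)\}$ ($\max\emptyset=0$), set $\sigma(s):=a$, add atom $a$ with no fields; yield $T$. $\mathsf{setspot}(s,s')$: $\sigma(s):=\sigma(s')$; $T$. $\mathsf{clearspot}(s)$: $\sigma(s):=\bot$; $T$.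 $\mathsf{equal}(s,s')$: yield $T$ iff $\sigma(s)=\sigma(s')$, else $F$. $\mathsf{undef}(s)$: $T$ iff $\sigma(s)=\bot$, else $F$. $\mathsf{addfield}(s,v)$: if $\sigma(s)\ne\bot$ and $v$ is not a field of $s$, add field $v$ with content $\bot$ to atom $\sigma(s)$, yield $T$; else $F$. $\mathsf{rmvfield}(s,v)$: if $v$ is a field of $s$, remove it, $T$; else $F$. $\mathsf{hasfield}(s,v)$: $T$ iff $v$ is a field of $s$, else $F$. $\mathsf{setfield}(s,v,s')$: if $v$ is a field of $s$, set $\alpha(\sigma(s))(v):=\sigma(s')$, $T$; else $F$. $\mathsf{getfield}(s,s',v)$: if $v$ is a field of $s'$, set $\sigma(s):=\alpha(\sigma(s'))(v)$, $T$; else $F$. $\mathsf{genact}(s,s')$: if $\sigma(s)\ne\bot$, $\sigma(s')\ne\bot$, some $f'\in\mathrm{Foci}$ has $\sigma(f')=\sigma(s)$ and some $m'\in\mathrm{Meth}$ has $\sigma(m')=\sigma(s')$: state unchanged, yield $M$, and the action is transformed into $f.m$ with $f$ the $\le$-least such $f'$ and $m$ the $\le$-least such $m'$; otherwise yield $B$ and new state $\uparrow$. In state $\uparrow$ every method yields $B$ and leads to $\uparrow$. $\mathrm{MDS}_t$ denotes the service in state $t$. Use operator. For a thread $p$ and state $t$, $p/_{\mathsf{md}}\mathrm{MDS}_t$ is determined by: $\mathsf S/\ldots=\mathsf S$; $\mathsf D/\ldots=\mathsf D$; $(\tau\circ x)/_{\mathsf{md}}\mathrm{MDS}_t=\tau\circ(x/_{\mathsf{md}}\mathrm{MDS}_t)$;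 $(x\unlhd g.m\unrhd y)/_{\mathsf{md}}\mathrm{MDS}_t=(x/_{\mathsf{md}}\mathrm{MDS}_t)\unlhd g.m\unrhd(y/_{\mathsf{md}}\mathrm{MDS}_t)$ for $g\ne\mathsf{md}$; for $a=\mathsf{md}.m$ and $t'=\mathrm{eff}(m,t)$: $(x\unlhd a\unrhd y)/_{\mathsf{md}}\mathrm{MDS}_t$ equals $\tau\circ(x/_{\mathsf{md}}\mathrm{MDS}_{t'})$ if the yield is $T$, $\tau\circ(y/_{\mathsf{md}}\mathrm{MDS}_{t'})$ if $F$, $(x\unlhd f.m'\unrhd y)/_{\mathsf{md}}\mathrm{MDS}_{t'}$ if $M$ with transformed action $f.m'$, and $\mathsf D$ if $B$; for infinite $p$, $\pi_n(p/_{\mathsf{md}}H)=\pi_n(\pi_n(p)/_{\mathsf{md}}H)$. Abstraction. $\tau_{\mathrm{tau}}(p)=\mathsf D$ if $p$ starts with infinitely many $\tau$'s; otherwise $\tau_{\mathrm{tau}}(\mathsf S)=\mathsf S$, $\tau_{\mathrm{tau}}(\mathsf D)=\mathsf D$, $\tau_{\mathrm{tau}}(\tau\circ x)=\tau_{\mathrm{tau}}(x)$, $\tau_{\mathrm{tau}}(x\unlhd a\unrhd y)=\tau_{\mathrm{tau}}(x)\unlhd a\unrhd\tau_{\mathrm{tau}}(y)$ for $a\ne\tau$. Representation. Fix pairwise distinct spots $s,u,v,s_1,\ldots,s_{k+2}\in\mathrm{Spot}\setminus(\mathrm{Foci}\cup\mathrm{Meth})$. In the PGA programs below every instruction has focus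 $\mathsf{md}$ (omitted). For $P=u_1;\ldots;u_k$ with distinct occurring foci $f_1,\ldots,f_n$ and distinct occurring methods $m_1,\ldots,m_{n'}$: $\mathrm{pgldmd}(P)=\mathsf{create}(f_1);\ldots;\mathsf{create}(f_n);\mathsf{create}(m_1);\ldots;\mathsf{create}(m_{n'});\mathsf{create}(s_1);\ldots;\mathsf{create}(s_{k+2});\rho_1(u_1);\ldots;\rho_k(u_k);\mathsf{addfield}(s_{k+1},\mathsf{stop});\mathsf{addfield}(s_{k+2},\mathsf{stop});\mathsf{setspot}(s,s_1);!$, where for $u_j\in\{f.m,+f.m,-f.m\}$, $\rho_j(u_j)=\mathsf{addfield}(s_j,\mathsf{focus});\mathsf{addfield}(s_j,\mathsf{method});\mathsf{addfield}(s_j,\mathsf{pos});\mathsf{addfield}(s_j,\mathsf{neg});\mathsf{setfield}(s_j,\mathsf{focus},f);\mathsf{setfield}(s_j,\mathsf{method},m);\mathsf{setfield}(s_j,\mathsf{pos},s_{p});\mathsf{setfield}(s_j,\mathsf{neg},s_{q})$ with $(p,q)=(j+1,j+1)$ for $f.m$, $(j+1,j+2)$ for $+f.m$, $(j+2,j+1)$ for $-f.m$; $\rho_j(\#\#l)=\mathsf{addfield}(s_j,\mathsf{ajmp});\mathsf{setfield}(s_j,\mathsf{ajmp},s_l)$ if $1\le l\le k$, and $\rho_j(\#\#l)=\mathsf{addfield}(s_j,\mathsf{stop})$ otherwise. Interpreter. $I=(+\mathsf{hasfield}(s,\mathsf{stop});!;+\mathsf{hasfield}(s,\mathsf{ajmp});\#9;\mathsf{getfield}(u,s,\mathsf{focus});\mathsf{getfield}(v,s,\mathsf{method});+\mathsf{genact}(u,v);\#3;\mathsf{getfield}(s,s,\mathsf{neg});\#4;\mathsf{getfield}(s,s,\mathsf{pos});\#2;\mathsf{getfield}(s,s,\mathsf{ajmp}))^\omega$,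 all instructions with focus $\mathsf{md}$. *)

theory Defs
  imports Main
begin

section \<open>Threads (projective limit model)\<close>

text \<open>Finite threads over basic actions 'a. The postconditional composition
  with the silent action tau is always of the form tau o x, represented by TauP.\<close>
datatype 'a fthr = S | D | Post "'a fthr" 'a "'a fthr" | TauP "'a fthr"

fun proj :: "nat \<Rightarrow> 'a fthr \<Rightarrow> 'a fthr" where
  "proj 0 _ = D"
| "proj (Suc n) S = S"
| "proj (Suc n) D = D"
| "proj (Suc n) (Post x a y) = Post (proj n x) a (proj n y)"
| "proj (Suc n) (TauP x) = TauP (proj n x)"

text \<open>A thread of the projective limit model is represented by its sequence of
  projections p n = pi_n(thread). Two threads are equal iff all projections are
  equal, i.e. iff the sequences are equal.\<close>
type_synonym 'a thread = "nat \<Rightarrow> 'a fthr"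

section \<open>PGA\<close>

datatype 'a pga_instr = Basic 'a | Pos 'a | Neg 'a | Jmp nat | Halt

text \<open>A PGA program is (xs, ys): the finite program xs if ys = [], and the
  eventually periodic program xs; ys^omega otherwise.\<close>
type_synonym 'a pga = "'a pga_instr list \<times> 'a pga_instr list"

definition instr_at :: "'a pga \<Rightarrow> nat \<Rightarrow> 'a pga_instr option" where
  "instr_at X i = (case X of (xs, ys) \<Rightarrow>
     if i = 0 then None
     else if i \<le> length xs then Some (xs ! (i - 1))
     else if ys = [] then None
     else Some (ys ! ((i - 1 - length xs) mod length ys)))"

definition fwd_jump :: "'a pga \<Rightarrow> nat \<Rightarrow> bool" where
  "fwd_jump X i = (\<exists>l>0. instr_at X i = Some (Jmp l))"

definition jnext :: "'a pga \<Rightarrow> nat \<Rightarrow> nat" where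
  "jnext X i = (case instr_at X i of Some (Jmp l) \<Rightarrow> i + l | _ \<Rightarrow> i)"

text \<open>approx X n i = pi_n(T_i).\<close>
fun approx :: "'a pga \<Rightarrow> nat \<Rightarrow> nat \<Rightarrow> 'a fthr" where
  "approx X 0 i = D"
| "approx X (Suc n) i =
    (if (\<forall>j. fwd_jump X ((jnext X ^^ j) i)) then D
     else (let e = (jnext X ^^ (LEAST j. \<not> fwd_jump X ((jnext X ^^ j) i))) i in
       (case instr_at X e of
          None \<Rightarrow> D
        | Some Halt \<Rightarrow> S
        | Some (Jmp l) \<Rightarrow> D
        | Some (Basic a) \<Rightarrow> Post (approx X n (Suc e)) a (approx X n (Suc e))
        | Some (Pos a) \<Rightarrow> Post (approx X n (Suc e)) a (approx X n (Suc (Suc e)))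
        | Some (Neg a) \<Rightarrow> Post (approx X n (Suc (Suc e))) a (approx X n (Suc e)))))"

definition pga_beh :: "'a pga \<Rightarrow> 'a thread" where
  "pga_beh X = (\<lambda>n. approx X n 1)"

section \<open>PGLD\<close>

datatype 'a pgld_instr = LBasic 'a | LPos 'a | LNeg 'a | LAJmp nat

definition psi :: "nat \<Rightarrow> nat \<Rightarrow> 'a pgld_instr \<Rightarrow> 'a pga_instr" where
  "psi k j u = (case u of
      LBasic a \<Rightarrow> Basic a | LPos a \<Rightarrow> Pos a | LNeg a \<Rightarrow> Neg a
    | LAJmp l \<Rightarrow> (if j \<le> l \<and> l \<le> k then Jmp (l - j)
                  else if 0 < l \<and> l < j then Jmp (k + 2 - (j - l))
                  else Halt))"

definition pgld_beh :: "'a pgld_instr list \<Rightarrow> 'a thread" where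
  "pgld_beh P = pga_beh ([], map (\<lambda>(j, u). psi (length P) j u) (zip [1..<length P + 1] P)
                              @ [Halt, Halt])"

definition instr_act :: "'a pgld_instr \<Rightarrow> 'a option" where
  "instr_act u = (case u of LBasic a \<Rightarrow> Some a | LPos a \<Rightarrow> Some a | LNeg a \<Rightarrow> Some a
                  | LAJmp _ \<Rightarrow> None)"

section \<open>Molecular dynamics\<close>

text \<open>Proto-atoms are the positive naturals, proatom = id; bot is None.\<close>

datatype ('s, 'fld) mdmeth =
    Create 's | Setspot 's 's | Clearspot 's | Equal 's 's | Undef 's
  | Addfield 's 'fld | Rmvfield 's 'fld | Hasfield 's 'fld
  | Setfield 's 'fld 's | Getfield 's 's 'fld | Genact 's 's

text \<open>Basic actions: f.m (FM f m) and md.m (MD m).\<close>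
datatype ('s, 'fld) act = FM 's 's | MD "('s, 'fld) mdmeth"

text \<open>Fields of an atom: 'fld => nat option option; None = not a field,
  Some None = field with content bot, Some (Some b) = content b.\<close>
datatype ('s, 'fld) mdstate = Up
  | St "'s \<Rightarrow> nat option" "nat \<Rightarrow> ('fld \<Rightarrow> nat option option) option"

definition t_init :: "('s, 'fld) mdstate" where
  "t_init = St (\<lambda>_. None) (\<lambda>_. None)"

datatype 's yld = YT | YF | YM 's 's | YB

definition fields_of :: "('s \<Rightarrow> nat option) \<Rightarrow> (nat \<Rightarrow> ('fld \<Rightarrow> nat option option) option)
    \<Rightarrow> 's \<Rightarrow> 'fld \<Rightarrow> nat option option" where
  "fields_of \<sigma> \<alpha> s = (case \<sigma> s of None \<Rightarrow> (\<lambda>_. None)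
                        | Some a \<Rightarrow> (case \<alpha> a of None \<Rightarrow> (\<lambda>_. None) | Some fm \<Rightarrow> fm))"

definition is_field :: "('s \<Rightarrow> nat option) \<Rightarrow> (nat \<Rightarrow> ('fld \<Rightarrow> nat option option) option)
    \<Rightarrow> 's \<Rightarrow> 'fld \<Rightarrow> bool" where
  "is_field \<sigma> \<alpha> s v = (\<sigma> s \<noteq> None \<and> fields_of \<sigma> \<alpha> s v \<noteq> None)"

text \<open>md_step Foci Meth m t = (yld(m,t), eff(m,t)); the yield YM f m' carries the
  transformed action f.m'.\<close>
fun md_step :: "'s::linorder set \<Rightarrow> 's set \<Rightarrow> ('s, 'fld) mdmeth \<Rightarrow> ('s, 'fld) mdstate
    \<Rightarrow> 's yld \<times> ('s, 'fld) mdstate" where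
  "md_step Fo Me m Up = (YB, Up)"
| "md_step Fo Me (Create s) (St \<sigma> \<alpha>) =
    (let a = Suc (if dom \<alpha> = {} then 0 else Max (dom \<alpha>))
     in (YT, St (\<sigma>(s := Some a)) (\<alpha>(a := Some (\<lambda>_. None)))))"
| "md_step Fo Me (Setspot s s') (St \<sigma> \<alpha>) = (YT, St (\<sigma>(s := \<sigma> s')) \<alpha>)"
| "md_step Fo Me (Clearspot s) (St \<sigma> \<alpha>) = (YT, St (\<sigma>(s := None)) \<alpha>)"
| "md_step Fo Me (Equal s s') (St \<sigma> \<alpha>) = (if \<sigma> s = \<sigma> s' then YT else YF, St \<sigma> \<alpha>)"
| "md_step Fo Me (Undef s) (St \<sigma> \<alpha>) = (if \<sigma> s = None then YT else YF, St \<sigma> \<alpha>)"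
| "md_step Fo Me (Addfield s v) (St \<sigma> \<alpha>) =
    (if \<sigma> s \<noteq> None \<and> \<not> is_field \<sigma> \<alpha> s v
     then (YT, St \<sigma> (\<alpha>(the (\<sigma> s) := Some ((fields_of \<sigma> \<alpha> s)(v := Some None)))))
     else (YF, St \<sigma> \<alpha>))"
| "md_step Fo Me (Rmvfield s v) (St \<sigma> \<alpha>) =
    (if is_field \<sigma> \<alpha> s v
     then (YT, St \<sigma> (\<alpha>(the (\<sigma> s) := Some ((fields_of \<sigma> \<alpha> s)(v := None)))))
     else (YF, St \<sigma> \<alpha>))"
| "md_step Fo Me (Hasfield s v) (St \<sigma> \<alpha>) = (if is_field \<sigma> \<alpha> s v then YT else YF, St \<sigma> \<alpha>)"
| "md_step Fo Me (Setfield s v s') (St \<sigma> \<alpha>) =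
    (if is_field \<sigma> \<alpha> s v
     then (YT, St \<sigma> (\<alpha>(the (\<sigma> s) := Some ((fields_of \<sigma> \<alpha> s)(v := Some (\<sigma> s'))))))
     else (YF, St \<sigma> \<alpha>))"
| "md_step Fo Me (Getfield s s' v) (St \<sigma> \<alpha>) =
    (if is_field \<sigma> \<alpha> s' v
     then (YT, St (\<sigma>(s := the (fields_of \<sigma> \<alpha> s' v))) \<alpha>)
     else (YF, St \<sigma> \<alpha>))"
| "md_step Fo Me (Genact s s') (St \<sigma> \<alpha>) =
    (if \<sigma> s \<noteq> None \<and> \<sigma> s' \<noteq> None \<and> (\<exists>f\<in>Fo. \<sigma> f = \<sigma> s) \<and> (\<exists>m\<in>Me. \<sigma> m = \<sigma> s')
     then (YM (Min {f\<in>Fo. \<sigma> f = \<sigma> s}) (Min {m\<in>Me. \<sigma> m = \<sigma> s'}), St \<sigma> \<alpha>)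
     else (YB, Up))"

section \<open>Use operator\<close>

fun use_fin :: "'s::linorder set \<Rightarrow> 's set \<Rightarrow> ('s, 'fld) act fthr \<Rightarrow> ('s, 'fld) mdstate
    \<Rightarrow> ('s, 'fld) act fthr" where
  "use_fin Fo Me S t = S"
| "use_fin Fo Me D t = D"
| "use_fin Fo Me (TauP x) t = TauP (use_fin Fo Me x t)"
| "use_fin Fo Me (Post x (FM f m) y) t = Post (use_fin Fo Me x t) (FM f m) (use_fin Fo Me y t)"
| "use_fin Fo Me (Post x (MD m) y) t =
    (case md_step Fo Me m t of
       (YT, t') \<Rightarrow> TauP (use_fin Fo Me x t')
     | (YF, t') \<Rightarrow> TauP (use_fin Fo Me y t')
     | (YM f m', t') \<Rightarrow> Post (use_fin Fo Me x t') (FM f m') (use_fin Fo Me y t')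
     | (YB, _) \<Rightarrow> D)"

text \<open>pi_n(p /md MDS_t) = pi_n(pi_n(p) /md MDS_t).\<close>
definition use_md :: "'s::linorder set \<Rightarrow> 's set \<Rightarrow> ('s, 'fld) act thread \<Rightarrow> ('s, 'fld) mdstate
    \<Rightarrow> ('s, 'fld) act thread" where
  "use_md Fo Me p t = (\<lambda>n. proj n (use_fin Fo Me (p n) t))"

section \<open>Abstraction tau_tau\<close>

definition ttail :: "'a thread \<Rightarrow> 'a thread" where
  "ttail p = (\<lambda>m. case p (Suc m) of TauP z \<Rightarrow> z | _ \<Rightarrow> D)"
definition tleft :: "'a thread \<Rightarrow> 'a thread" where
  "tleft p = (\<lambda>m. case p (Suc m) of Post x a y \<Rightarrow> x | _ \<Rightarrow> D)"
definition tright :: "'a thread \<Rightarrow> 'a thread" where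
  "tright p = (\<lambda>m. case p (Suc m) of Post x a y \<Rightarrow> y | _ \<Rightarrow> D)"

definition head_tau :: "'a thread \<Rightarrow> bool" where
  "head_tau p = (\<exists>z. p 1 = TauP z)"

definition inf_tau :: "'a thread \<Rightarrow> bool" where
  "inf_tau p = (\<forall>k. head_tau ((ttail ^^ k) p))"

text \<open>tt n p = pi_n(tau_tau(p)).\<close>
fun tt :: "nat \<Rightarrow> 'a thread \<Rightarrow> 'a fthr" where
  "tt 0 p = D"
| "tt (Suc n) p =
    (if inf_tau p then D
     else (let q = (ttail ^^ (LEAST k. \<not> head_tau ((ttail ^^ k) p))) p in
       (case q 1 of S \<Rightarrow> S | D \<Rightarrow> D
        | Post _ a _ \<Rightarrow> Post (tt n (tleft q)) a (tt n (tright q))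
        | TauP _ \<Rightarrow> D)))"

definition tau_abs :: "'a thread \<Rightarrow> 'a thread" where
  "tau_abs p = (\<lambda>n. tt n p)"

section \<open>Representation and interpreter\<close>

datatype fname = FStop | FAjmp | FFocus | FMethod | FPos | FNeg

definition rho_act :: "(fname \<Rightarrow> 'fld) \<Rightarrow> (nat \<Rightarrow> 's) \<Rightarrow> nat \<Rightarrow> 's \<Rightarrow> 's \<Rightarrow> nat \<Rightarrow> nat
    \<Rightarrow> ('s, 'fld) mdmeth list" where
  "rho_act fld sp j f m p q =
    [Addfield (sp j) (fld FFocus), Addfield (sp j) (fld FMethod),
     Addfield (sp j) (fld FPos), Addfield (sp j) (fld FNeg),
     Setfield (sp j) (fld FFocus) f, Setfield (sp j) (fld FMethod) m,
     Setfield (sp j) (fld FPos) (sp p), Setfield (sp j) (fld FNeg) (sp q)]"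

definition rho :: "(fname \<Rightarrow> 'fld) \<Rightarrow> (nat \<Rightarrow> 's) \<Rightarrow> nat \<Rightarrow> nat \<Rightarrow> ('s, 'fld) act pgld_instr
    \<Rightarrow> ('s, 'fld) mdmeth list" where
  "rho fld sp k j u = (case u of
      LBasic (FM f m) \<Rightarrow> rho_act fld sp j f m (j + 1) (j + 1)
    | LPos (FM f m) \<Rightarrow> rho_act fld sp j f m (j + 1) (j + 2)
    | LNeg (FM f m) \<Rightarrow> rho_act fld sp j f m (j + 2) (j + 1)
    | LAJmp l \<Rightarrow> (if 1 \<le> l \<and> l \<le> k
                  then [Addfield (sp j) (fld FAjmp), Setfield (sp j) (fld FAjmp) (sp l)]
                  else [Addfield (sp j) (fld FStop)])
    | _ \<Rightarrow> [])"

text \<open>pgldmd(P) as a finite PGA program, all instructions with focus md.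
  fs, ms: the enumerations f_1..f_n and m_1..m_n' of occurring foci/methods.\<close>
definition pgldmd :: "(fname \<Rightarrow> 'fld) \<Rightarrow> (nat \<Rightarrow> 's) \<Rightarrow> 's \<Rightarrow> 's list \<Rightarrow> 's list
    \<Rightarrow> ('s, 'fld) act pgld_instr list \<Rightarrow> ('s, 'fld) act pga_instr list" where
  "pgldmd fld sp s fs ms P =
    (let k = length P in
     map (\<lambda>x. Basic (MD (Create x))) (fs @ ms @ map sp [1..<k + 3])
     @ map (\<lambda>m. Basic (MD m)) (concat (map (\<lambda>(j, u). rho fld sp k j u) (zip [1..<k + 1] P)))
     @ [Basic (MD (Addfield (sp (k + 1)) (fld FStop))),
        Basic (MD (Addfield (sp (k + 2)) (fld FStop))),
        Basic (MD (Setspot s (sp 1))), Halt])"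

text \<open>State reached by applying eff successively for the methods of the basic
  md-instructions of a straight-line program (as pgldmd(P) is).\<close>
definition run_md :: "'s::linorder set \<Rightarrow> 's set \<Rightarrow> ('s, 'fld) act pga_instr list
    \<Rightarrow> ('s, 'fld) mdstate \<Rightarrow> ('s, 'fld) mdstate" where
  "run_md Fo Me X t0 = foldl (\<lambda>t i. case i of Basic (MD m) \<Rightarrow> snd (md_step Fo Me m t) | _ \<Rightarrow> t) t0 X"

definition interp :: "(fname \<Rightarrow> 'fld) \<Rightarrow> 's \<Rightarrow> 's \<Rightarrow> 's \<Rightarrow> ('s, 'fld) act pga" where
  "interp fld s u v = ([],
    [Pos (MD (Hasfield s (fld FStop))), Halt, Pos (MD (Hasfield s (fld FAjmp))), Jmp 9,
     Basic (MD (Getfield u s (fld FFocus))), Basic (MD (Getfield v s (fld FMethod))),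
     Pos (MD (Genact u v)), Jmp 3, Basic (MD (Getfield s s (fld FNeg))), Jmp 4,
     Basic (MD (Getfield s s (fld FPos))), Jmp 2, Basic (MD (Getfield s s (fld FAjmp)))])"

definition foci_of :: "('s, 'fld) act pgld_instr list \<Rightarrow> 's set" where
  "foci_of P = {f. \<exists>u\<in>set P. \<exists>m. instr_act u = Some (FM f m)}"

definition meths_of :: "('s, 'fld) act pgld_instr list \<Rightarrow> 's set" where
  "meths_of P = {m. \<exists>u\<in>set P. \<exists>f. instr_act u = Some (FM f m)}"

end

theory Submission
  imports Defs
begin

text \<open>The represented program is a linked structure of atoms, one per instruction, plus two
  stop atoms playing the role of the trailing "!;!". The interpreter keeps the current
  instruction's atom in spot s. Starting from the atom of instruction j, one round of the
  interpreter loop either halts (stop field), follows an absolute jump (ajmp field) with only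
  silent steps, or performs exactly the action f.m stored in the atom and continues with the
  atom of the positive or negative successor. These are precisely the steps of the PGA
  translation of P from position j, so after abstracting from the silent steps both threads
  have the same projections. Jump chains that loop forever give D on both sides: in PGA an
  infinite chain of forward jumps or a #0, in the interpreter an infinite sequence of
  silent steps.\<close>

section \<open>Execution of PGA programs\<close>

lemma approx_Suc_nonjump:
  assumes "\<not> fwd_jump X i"
  shows "approx X (Suc n) i = (case instr_at X i of
          None \<Rightarrow> D
        | Some Halt \<Rightarrow> S
        | Some (Jmp l) \<Rightarrow> D
        | Some (Basic a) \<Rightarrow> Post (approx X n (Suc i)) a (approx X n (Suc i))
        | Some (Pos a) \<Rightarrow> Post (approx X n (Suc i)) a (approx X n (Suc (Suc i)))
        | Some (Neg a) \<Rightarrow> Post (approx X n (Suc (Suc i))) a (approx X n (Suc i)))"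
proof -
  have no_loop: "(\<forall>j. fwd_jump X ((jnext X ^^ j) i)) = False"
    using assms by (metis funpow_0)
  have least: "(LEAST j. \<not> fwd_jump X ((jnext X ^^ j) i)) = 0"
    by (rule Least_eq_0) (simp add: assms)
  show ?thesis unfolding approx.simps Let_def no_loop least funpow_0 if_False by (rule refl)
qed

lemma approx_Suc_jump:
  assumes "fwd_jump X i"
  shows "approx X (Suc n) i = approx X (Suc n) (jnext X i)"
proof -
  have shift: "\<And>j. (jnext X ^^ Suc j) i = (jnext X ^^ j) (jnext X i)"
    by (simp add: funpow_Suc_right del: funpow.simps)
  have loop_iff: "(\<forall>j. fwd_jump X ((jnext X ^^ j) i)) \<longleftrightarrow> (\<forall>j. fwd_jump X ((jnext X ^^ j) (jnext X i)))"
  proof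
    assume "\<forall>j. fwd_jump X ((jnext X ^^ j) i)"
    then show "\<forall>j. fwd_jump X ((jnext X ^^ j) (jnext X i))" by (metis shift)
  next
    assume h: "\<forall>j. fwd_jump X ((jnext X ^^ j) (jnext X i))"
    show "\<forall>j. fwd_jump X ((jnext X ^^ j) i)"
    proof
      fix j show "fwd_jump X ((jnext X ^^ j) i)"
        using h assms shift by (cases j) auto
    qed
  qed
  show ?thesis
  proof (cases "\<forall>j. fwd_jump X ((jnext X ^^ j) i)")
    case True
    then show ?thesis using loop_iff by simp
  next
    case False
    then obtain j0 where j0: "\<not> fwd_jump X ((jnext X ^^ j0) i)" by blast
    have "(LEAST j. \<not> fwd_jump X ((jnext X ^^ j) i))
        = Suc (LEAST j. \<not> fwd_jump X ((jnext X ^^ j) (jnext X i)))"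
      by (subst Least_Suc[of "\<lambda>j. \<not> fwd_jump X ((jnext X ^^ j) i)" j0, OF j0]) (use assms shift in auto)
    then have "(jnext X ^^ (LEAST j. \<not> fwd_jump X ((jnext X ^^ j) i))) i
        = (jnext X ^^ (LEAST j. \<not> fwd_jump X ((jnext X ^^ j) (jnext X i)))) (jnext X i)"
      using shift by simp
    then show ?thesis using False loop_iff by (simp only: approx.simps Let_def)
  qed
qed

lemma le_jnext: "i \<le> jnext X i"
  by (auto simp: jnext_def split: option.splits pga_instr.splits)

lemma instr_at_periodic:
  assumes "ys \<noteq> []" "1 \<le> i"
  shows "instr_at ([], ys) (i + length ys) = instr_at ([], ys) i"
proof -
  have "i + length ys - 1 = (i - 1) + length ys" using assms by simp
  then have "(i + length ys - 1) mod length ys = (i - 1) mod length ys" by simp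
  then show ?thesis using assms by (simp add: instr_at_def)
qed

lemma jnext_periodic:
  assumes "ys \<noteq> []" "1 \<le> i"
  shows "jnext ([], ys) (i + length ys) = jnext ([], ys) i + length ys"
    and "fwd_jump ([], ys) (i + length ys) = fwd_jump ([], ys) i"
  using instr_at_periodic[OF assms]
  by (auto simp: jnext_def fwd_jump_def split: option.splits pga_instr.splits)

lemma funpow_jnext_periodic:
  assumes "ys \<noteq> []" "1 \<le> i"
  shows "(jnext ([], ys) ^^ j) (i + length ys) = (jnext ([], ys) ^^ j) i + length ys
        \<and> 1 \<le> (jnext ([], ys) ^^ j) i"
proof (induction j)
  case 0 then show ?case using assms by simp
next
  case (Suc j)
  then show ?case using jnext_periodic(1)[OF assms(1), of "(jnext ([], ys) ^^ j) i"]
      le_jnext[of "(jnext ([], ys) ^^ j) i" "([], ys)"] by auto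
qed

lemma approx_periodic:
  assumes "ys \<noteq> []"
  shows "1 \<le> i \<Longrightarrow> approx ([], ys) n (i + length ys) = approx ([], ys) n i"
proof (induction n arbitrary: i)
  case 0 then show ?case by simp
next
  case (Suc n)
  let ?J = "\<lambda>j i. (jnext ([], ys) ^^ j) i"
  have shift: "\<And>j. ?J j (i + length ys) = ?J j i + length ys"
    and pos: "\<And>j. 1 \<le> ?J j i"
    using funpow_jnext_periodic[OF assms Suc.prems] by blast+
  have jump: "\<And>j. fwd_jump ([], ys) (?J j (i + length ys)) = fwd_jump ([], ys) (?J j i)"
    using shift pos jnext_periodic(2)[OF assms] by simp
  have instr: "\<And>j. instr_at ([], ys) (?J j (i + length ys)) = instr_at ([], ys) (?J j i)"
    using shift pos instr_at_periodic[OF assms] by simp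
  have IH: "\<And>j. approx ([], ys) n (Suc (?J j (i + length ys))) = approx ([], ys) n (Suc (?J j i))"
     "\<And>j. approx ([], ys) n (Suc (Suc (?J j (i + length ys)))) = approx ([], ys) n (Suc (Suc (?J j i)))"
    using shift Suc.IH pos by (metis add_Suc le_Suc_eq le_add1)+
  show ?case unfolding approx.simps Let_def jump instr IH by (rule refl)
qed

lemma approx_Suc_eq_D_if_jump_trap:
  assumes trap: "\<forall>p\<in>M. instr_at X p = Some (Jmp 0) \<or> (fwd_jump X p \<and> jnext X p \<in> M)"
    and "i \<in> M"
  shows "approx X (Suc n) i = D"
proof (cases "\<forall>j. fwd_jump X ((jnext X ^^ j) i)")
  case True then show ?thesis by simp
next
  case False
  define L where "L = (LEAST j. \<not> fwd_jump X ((jnext X ^^ j) i))"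
  have not_jump: "\<not> fwd_jump X ((jnext X ^^ L) i)"
    unfolding L_def using False by (metis (mono_tags, lifting) LeastI)
  have jumps: "\<And>j. j < L \<Longrightarrow> fwd_jump X ((jnext X ^^ j) i)"
    unfolding L_def using not_less_Least by blast
  have "j \<le> L \<Longrightarrow> (jnext X ^^ j) i \<in> M" for j
  proof (induction j)
    case 0 then show ?case using \<open>i \<in> M\<close> by simp
  next
    case (Suc j)
    then have "(jnext X ^^ j) i \<in> M" "fwd_jump X ((jnext X ^^ j) i)" using jumps by auto
    then show ?case using trap by (force simp: fwd_jump_def)
  qed
  then have "instr_at X ((jnext X ^^ L) i) = Some (Jmp 0)" using trap not_jump by blast
  then show ?thesis using False unfolding L_def by (simp add: Let_def)
qed

lemma approx_Suc_Halt: "instr_at X j = Some Halt \<Longrightarrow> approx X (Suc n) j = S"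
  by (subst approx_Suc_nonjump) (simp_all add: fwd_jump_def)

declare approx.simps(2) [simp del]

section \<open>Abstraction from silent steps\<close>

lemma ttail_eq_if_TauP: "\<forall>m. p (Suc m) = TauP (q m) \<Longrightarrow> ttail p = q"
  by (auto simp: ttail_def)

lemma head_tau_if_TauP: "\<forall>m. p (Suc m) = TauP (q m) \<Longrightarrow> head_tau p"
  by (auto simp: head_tau_def)

lemma tt_TauP:
  assumes step: "\<forall>m. p (Suc m) = TauP (q m)"
  shows "tt n p = tt n q"
proof (cases n)
  case 0 then show ?thesis by simp
next
  case (Suc n')
  have tl: "ttail p = q" using ttail_eq_if_TauP[OF step] .
  have hd: "head_tau p" using head_tau_if_TauP[OF step] .
  have shift: "\<And>k. (ttail ^^ Suc k) p = (ttail ^^ k) q"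
    using tl by (simp add: funpow_Suc_right del: funpow.simps)
  have inf_iff: "inf_tau p = inf_tau q"
    unfolding inf_tau_def
  proof
    assume "\<forall>k. head_tau ((ttail ^^ k) p)"
    then show "\<forall>k. head_tau ((ttail ^^ k) q)" by (metis shift)
  next
    assume h: "\<forall>k. head_tau ((ttail ^^ k) q)"
    show "\<forall>k. head_tau ((ttail ^^ k) p)"
    proof
      fix k show "head_tau ((ttail ^^ k) p)" using h hd shift by (cases k) auto
    qed
  qed
  show ?thesis
  proof (cases "inf_tau q")
    case True then show ?thesis using inf_iff Suc by simp
  next
    case False
    then obtain k0 where "\<not> head_tau ((ttail ^^ k0) q)" unfolding inf_tau_def by blast
    then have k0: "\<not> head_tau ((ttail ^^ Suc k0) p)" using shift by simp
    have "(LEAST k. \<not> head_tau ((ttail ^^ k) p)) = Suc (LEAST k. \<not> head_tau ((ttail ^^ k) q))"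
      by (subst Least_Suc[of "\<lambda>k. \<not> head_tau ((ttail ^^ k) p)", OF k0]) (use hd shift in auto)
    then have "(ttail ^^ (LEAST k. \<not> head_tau ((ttail ^^ k) p))) p
        = (ttail ^^ (LEAST k. \<not> head_tau ((ttail ^^ k) q))) q"
      using shift by simp
    then show ?thesis using False inf_iff Suc by (simp only: tt.simps Let_def)
  qed
qed

lemma tt_Suc_nontau:
  assumes "\<forall>m. \<not> (\<exists>z. p (Suc m) = TauP z)"
  shows "tt (Suc n) p = (case p 1 of S \<Rightarrow> S | D \<Rightarrow> D
        | Post _ a _ \<Rightarrow> Post (tt n (tleft p)) a (tt n (tright p)) | TauP _ \<Rightarrow> D)"
proof -
  have not_head: "\<not> head_tau p" using assms by (simp add: head_tau_def)
  then have finite_tau: "inf_tau p = False" unfolding inf_tau_def by (metis funpow_0)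
  have least: "(LEAST k. \<not> head_tau ((ttail ^^ k) p)) = 0"
    by (rule Least_eq_0) (simp add: not_head)
  show ?thesis unfolding tt.simps finite_tau least Let_def funpow_0 if_False by (rule refl)
qed

lemma tt_Suc_Post:
  assumes "\<forall>m. p (Suc m) = Post (x m) a (y m)"
  shows "tt (Suc n) p = Post (tt n x) a (tt n y)"
proof -
  have "tleft p = x" "tright p = y" using assms by (auto simp: tleft_def tright_def)
  then show ?thesis using assms by (subst tt_Suc_nontau) simp_all
qed

lemma tt_Suc_S: "\<forall>m. p (Suc m) = S \<Longrightarrow> tt (Suc n) p = S"
  by (subst tt_Suc_nontau) simp_all

lemma tt_eq_D_if_inf_tau: "inf_tau p \<Longrightarrow> tt n p = D"
  by (cases n) auto

lemma inf_tau_if_ttail_closed: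
  assumes closed: "\<forall>p\<in>M. head_tau p \<and> ttail p \<in> M" and "p \<in> M"
  shows "inf_tau p"
proof -
  have "\<forall>p\<in>M. (ttail ^^ k) p \<in> M" for k
    by (induction k) (use closed in \<open>simp_all add: funpow_Suc_right del: funpow.simps\<close>)
  then show ?thesis using \<open>p \<in> M\<close> closed unfolding inf_tau_def by blast
qed

section \<open>Running lists of molecular dynamics methods\<close>

definition run_meths :: "'s::linorder set \<Rightarrow> 's set \<Rightarrow> ('s, 'fld) mdmeth list
    \<Rightarrow> ('s, 'fld) mdstate \<Rightarrow> ('s, 'fld) mdstate" where
  "run_meths Fo Me ms t = foldl (\<lambda>t m. snd (md_step Fo Me m t)) t ms"

lemma run_meths_Nil [simp]: "run_meths Fo Me [] t = t"
  by (simp add: run_meths_def)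

lemma run_meths_Cons [simp]:
  "run_meths Fo Me (m # ms) t = run_meths Fo Me ms (snd (md_step Fo Me m t))"
  by (simp add: run_meths_def)

lemma run_meths_append [simp]:
  "run_meths Fo Me (ms @ ns) t = run_meths Fo Me ns (run_meths Fo Me ms t)"
  by (simp add: run_meths_def)

lemma run_md_Basic_MD_append:
  "run_md Fo Me (map (\<lambda>m. Basic (MD m)) ms @ rest) t = run_md Fo Me rest (run_meths Fo Me ms t)"
  by (induction ms arbitrary: t) (simp_all add: run_md_def)

lemma run_meths_Create:
  "distinct L \<Longrightarrow> finite (dom \<alpha>) \<Longrightarrow> \<exists>g \<alpha>'. run_meths Fo Me (map Create L) (St \<sigma> \<alpha>) =
     St (\<lambda>x. if x \<in> set L then Some (g x) else \<sigma> x) \<alpha>' \<and> inj_on g (set L)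
   \<and> (\<forall>x\<in>set L. g x \<notin> dom \<alpha> \<and> \<alpha>' (g x) = Some (\<lambda>_. None))
   \<and> (\<forall>a. a \<notin> g ` set L \<longrightarrow> \<alpha>' a = \<alpha> a) \<and> finite (dom \<alpha>')"
proof (induction L arbitrary: \<sigma> \<alpha>)
  case Nil then show ?case by simp
next
  case (Cons x L)
  define a where "a = Suc (if dom \<alpha> = {} then 0 else Max (dom \<alpha>))"
  have a_new: "a \<notin> dom \<alpha>"
  proof
    assume "a \<in> dom \<alpha>"
    then have "a \<le> Max (dom \<alpha>)" "dom \<alpha> \<noteq> {}" using Cons.prems by auto
    then show False unfolding a_def by simp
  qed
  have step: "run_meths Fo Me (map Create (x # L)) (St \<sigma> \<alpha>)
      = run_meths Fo Me (map Create L) (St (\<sigma>(x := Some a)) (\<alpha>(a := Some (\<lambda>_. None))))"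
    by (simp add: a_def Let_def)
  obtain g \<alpha>' where IH: "run_meths Fo Me (map Create L) (St (\<sigma>(x := Some a)) (\<alpha>(a := Some (\<lambda>_. None)))) =
     St (\<lambda>y. if y \<in> set L then Some (g y) else (\<sigma>(x := Some a)) y) \<alpha>'" "inj_on g (set L)"
   "\<forall>y\<in>set L. g y \<notin> dom (\<alpha>(a := Some (\<lambda>_. None))) \<and> \<alpha>' (g y) = Some (\<lambda>_. None)"
   "\<forall>b. b \<notin> g ` set L \<longrightarrow> \<alpha>' b = (\<alpha>(a := Some (\<lambda>_. None))) b" "finite (dom \<alpha>')"
    using Cons.IH[of "\<alpha>(a := Some (\<lambda>_. None))" "\<sigma>(x := Some a)"] Cons.prems
    by (auto simp del: fun_upd_apply)
  have x_new: "x \<notin> set L" using Cons.prems by simp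
  define g' where "g' = g(x := a)"
  have a_not_g: "a \<notin> g ` set L" using IH(3) by auto
  have "(\<lambda>y. if y \<in> set L then Some (g y) else (\<sigma>(x := Some a)) y)
      = (\<lambda>y. if y \<in> set (x # L) then Some (g' y) else \<sigma> y)"
    using x_new by (auto simp: g'_def)
  moreover have "inj_on g' (set (x # L))"
    using IH(2) a_not_g x_new unfolding g'_def by (auto simp: inj_on_def)
  moreover have "\<forall>y\<in>set (x # L). g' y \<notin> dom \<alpha> \<and> \<alpha>' (g' y) = Some (\<lambda>_. None)"
    using IH(3,4) a_new a_not_g x_new by (auto simp: g'_def split: if_splits)
  moreover have "\<forall>b. b \<notin> g' ` set (x # L) \<longrightarrow> \<alpha>' b = \<alpha> b"
    using IH(4) x_new by (auto simp: g'_def)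
  ultimately show ?case using IH(1,5) unfolding step by auto
qed

definition action_fields :: "('s \<Rightarrow> nat option) \<Rightarrow> (fname \<Rightarrow> 'fld) \<Rightarrow> (nat \<Rightarrow> 's)
    \<Rightarrow> 's \<Rightarrow> 's \<Rightarrow> nat \<Rightarrow> nat \<Rightarrow> 'fld \<Rightarrow> nat option option" where
  "action_fields \<sigma> fld sp f m p q = (\<lambda>_. None)(fld FFocus := Some (\<sigma> f), fld FMethod := Some (\<sigma> m),
     fld FPos := Some (\<sigma> (sp p)), fld FNeg := Some (\<sigma> (sp q)))"

definition stop_fields :: "(fname \<Rightarrow> 'fld) \<Rightarrow> 'fld \<Rightarrow> nat option option" where
  "stop_fields fld = (\<lambda>_. None)(fld FStop := Some None)"

definition instr_fields :: "('s \<Rightarrow> nat option) \<Rightarrow> (fname \<Rightarrow> 'fld) \<Rightarrow> (nat \<Rightarrow> 's) \<Rightarrow> nat \<Rightarrow> nat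
    \<Rightarrow> ('s, 'fld) act pgld_instr \<Rightarrow> 'fld \<Rightarrow> nat option option" where
  "instr_fields \<sigma> fld sp k j u = (case u of
      LBasic (FM f m) \<Rightarrow> action_fields \<sigma> fld sp f m (j + 1) (j + 1)
    | LPos (FM f m) \<Rightarrow> action_fields \<sigma> fld sp f m (j + 1) (j + 2)
    | LNeg (FM f m) \<Rightarrow> action_fields \<sigma> fld sp f m (j + 2) (j + 1)
    | LAJmp l \<Rightarrow> (if 1 \<le> l \<and> l \<le> k then (\<lambda>_. None)(fld FAjmp := Some (\<sigma> (sp l)))
                  else stop_fields fld)
    | _ \<Rightarrow> (\<lambda>_. None))"

lemma run_meths_rho_act:
  assumes "inj fld" "\<sigma> (sp j) = Some a" "\<alpha> a = Some (\<lambda>_. None)"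
  shows "run_meths Fo Me (rho_act fld sp j f m p q) (St \<sigma> \<alpha>)
    = St \<sigma> (\<alpha>(a := Some (action_fields \<sigma> fld sp f m p q)))"
  using assms(2,3) inj_eq[OF assms(1)]
  by (simp add: rho_act_def is_field_def fields_of_def action_fields_def)

lemma run_meths_rho:
  assumes "inj fld" "\<sigma> (sp j) = Some a" "\<alpha> a = Some (\<lambda>_. None)"
  shows "run_meths Fo Me (rho fld sp k j u) (St \<sigma> \<alpha>) = St \<sigma> (\<alpha>(a := Some (instr_fields \<sigma> fld sp k j u)))"
proof -
  have "\<alpha>(a := Some (\<lambda>_. None)) = \<alpha>" using assms(3) by auto
  then show ?thesis
    using assms run_meths_rho_act[where \<sigma>=\<sigma> and sp=sp and j=j and a=a and \<alpha>=\<alpha>, OF assms]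
      inj_eq[OF assms(1)]
    by (cases u) (auto simp: rho_def instr_fields_def stop_fields_def is_field_def fields_of_def
        split: act.splits)
qed

lemma run_meths_concat_rho:
  assumes "inj fld"
  shows "\<forall>(j,u)\<in>set xs. \<sigma> (sp j) \<noteq> None \<and> \<alpha> (the (\<sigma> (sp j))) = Some (\<lambda>_. None) \<Longrightarrow>
    distinct (map (\<lambda>(j,u). the (\<sigma> (sp j))) xs) \<Longrightarrow>
    \<exists>\<alpha>'. run_meths Fo Me (concat (map (\<lambda>(j,u). rho fld sp k j u) xs)) (St \<sigma> \<alpha>) = St \<sigma> \<alpha>'
      \<and> (\<forall>(j,u)\<in>set xs. \<alpha>' (the (\<sigma> (sp j))) = Some (instr_fields \<sigma> fld sp k j u))
      \<and> (\<forall>a. a \<notin> (\<lambda>(j,u). the (\<sigma> (sp j))) ` set xs \<longrightarrow> \<alpha>' a = \<alpha> a)"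
proof (induction xs arbitrary: \<alpha>)
  case Nil then show ?case by simp
next
  case (Cons x xs)
  obtain j u where x: "x = (j, u)" by (cases x)
  obtain a where a: "\<sigma> (sp j) = Some a" using Cons.prems x by auto
  have empty: "\<alpha> a = Some (\<lambda>_. None)" using Cons.prems x a by auto
  define \<alpha>1 where "\<alpha>1 = \<alpha>(a := Some (instr_fields \<sigma> fld sp k j u))"
  have a_new: "a \<notin> (\<lambda>(j,u). the (\<sigma> (sp j))) ` set xs" using Cons.prems(2) x a by auto
  have "\<forall>(j,u)\<in>set xs. \<sigma> (sp j) \<noteq> None \<and> \<alpha>1 (the (\<sigma> (sp j))) = Some (\<lambda>_. None)"
    using Cons.prems(1) a_new unfolding \<alpha>1_def by force
  moreover have "distinct (map (\<lambda>(j,u). the (\<sigma> (sp j))) xs)" using Cons.prems(2) by simp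
  ultimately obtain \<alpha>' where IH:
    "run_meths Fo Me (concat (map (\<lambda>(j,u). rho fld sp k j u) xs)) (St \<sigma> \<alpha>1) = St \<sigma> \<alpha>'"
    "\<forall>(j,u)\<in>set xs. \<alpha>' (the (\<sigma> (sp j))) = Some (instr_fields \<sigma> fld sp k j u)"
    "\<forall>b. b \<notin> (\<lambda>(j,u). the (\<sigma> (sp j))) ` set xs \<longrightarrow> \<alpha>' b = \<alpha>1 b"
    using Cons.IH by blast
  have "run_meths Fo Me (concat (map (\<lambda>(j,u). rho fld sp k j u) (x # xs))) (St \<sigma> \<alpha>) = St \<sigma> \<alpha>'"
    using run_meths_rho[where \<sigma>=\<sigma> and sp=sp and j=j and \<alpha>=\<alpha>, OF assms a empty] IH(1) x
    unfolding \<alpha>1_def by simp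
  moreover have "\<forall>(j',u')\<in>set (x # xs). \<alpha>' (the (\<sigma> (sp j'))) = Some (instr_fields \<sigma> fld sp k j' u')"
    using IH(2,3) a_new x a unfolding \<alpha>1_def by auto
  moreover have "\<forall>b. b \<notin> (\<lambda>(j,u). the (\<sigma> (sp j))) ` set (x # xs) \<longrightarrow> \<alpha>' b = \<alpha> b"
    using IH(3) x a unfolding \<alpha>1_def by auto
  ultimately show ?case by blast
qed

lemma mem_zip_upt_iff:
  "(j, w) \<in> set (zip [1..<length xs + 1] xs) \<longleftrightarrow> j \<in> {1..length xs} \<and> w = xs ! (j - 1)"
proof
  assume "(j, w) \<in> set (zip [1..<length xs + 1] xs)"
  then show "j \<in> {1..length xs} \<and> w = xs ! (j - 1)"
    by (auto simp: set_zip simp del: upt_Suc)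
next
  assume j: "j \<in> {1..length xs} \<and> w = xs ! (j - 1)"
  then have "zip [1..<length xs + 1] xs ! (j - 1) = (j, w)" "j - 1 < length xs"
    by (auto simp del: upt_Suc)
  then show "(j, w) \<in> set (zip [1..<length xs + 1] xs)"
    by (metis length_map map_fst_zip length_upt diff_add_inverse2 nth_mem)
qed

section \<open>The state built by pgldmd\<close>

locale pgldmd_rep =
  fixes Fo Me :: "'s::{finite,linorder} set"
    and fld :: "fname \<Rightarrow> 'fld::finite"
    and s u v :: 's
    and sp :: "nat \<Rightarrow> 's"
    and P :: "('s, 'fld) act pgld_instr list"
    and fs ms :: "'s list"
  assumes foci_meths_disjoint: "Fo \<inter> Me = {}"
    and inj_fld: "inj fld"
    and P_nonempty: "length P \<ge> 1"
    and P_actions: "\<forall>w\<in>set P. \<forall>a. instr_act w = Some a \<longrightarrow> (\<exists>f m. a = FM f m \<and> f \<in> Fo \<and> m \<in> Me)"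
    and distinct_spots: "distinct (s # u # v # map sp [1..<length P + 3])"
    and spots_fresh: "\<forall>x\<in>{s, u, v} \<union> sp ` {1..length P + 2}. x \<notin> Fo \<union> Me"
    and distinct_fs: "distinct fs" and set_fs: "set fs = foci_of P"
    and distinct_ms: "distinct ms" and set_ms: "set ms = meths_of P"
begin

abbreviation "K \<equiv> length P"

lemma fld_eq_iff [simp]: "fld a = fld b \<longleftrightarrow> a = b"
  using inj_fld by (simp add: inj_eq)

lemma set_fs_subset: "set fs \<subseteq> Fo"
  using P_actions set_fs unfolding foci_of_def by fastforce

lemma set_ms_subset: "set ms \<subseteq> Me"
  using P_actions set_ms unfolding meths_of_def by fastforce

lemma sp_fresh: "j \<in> {1..K+2} \<Longrightarrow> sp j \<notin> Fo \<and> sp j \<notin> Me \<and> sp j \<noteq> s \<and> sp j \<noteq> u \<and> sp j \<noteq> v"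
  using spots_fresh distinct_spots by auto

lemma s_u_v_fresh: "s \<noteq> u" "s \<noteq> v" "u \<noteq> v" "s \<notin> Fo" "u \<notin> Fo" "v \<notin> Fo" "s \<notin> Me" "u \<notin> Me" "v \<notin> Me"
  using distinct_spots spots_fresh by auto

definition created_spots :: "'s list" where
  "created_spots = fs @ ms @ map sp [1..<K + 3]"

lemma distinct_created_spots: "distinct created_spots"
proof -
  have "set fs \<inter> set ms = {}" using set_fs_subset set_ms_subset foci_meths_disjoint by blast
  moreover have "set fs \<inter> sp ` {1..<K+3} = {}" using set_fs_subset sp_fresh by fastforce
  moreover have "set ms \<inter> sp ` {1..<K+3} = {}" using set_ms_subset sp_fresh by fastforce
  moreover have "distinct (map sp [1..<K + 3])" using distinct_spots by simp
  ultimately show ?thesis using distinct_fs distinct_ms unfolding created_spots_def by auto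
qed

lemma sp_in_created_spots: "j \<in> {1..K+2} \<Longrightarrow> sp j \<in> set created_spots"
  unfolding created_spots_def by auto

text \<open>The atoms of the occurring foci and methods identify them uniquely, which is what
  lets genact recover the original action. The value of spot s is not constrained.\<close>
definition represents :: "('s \<Rightarrow> nat option) \<Rightarrow> (nat \<Rightarrow> ('fld \<Rightarrow> nat option option) option) \<Rightarrow> bool" where
  "represents \<sigma> \<alpha> \<longleftrightarrow> (\<forall>j\<in>{1..K+2}. \<sigma> (sp j) \<noteq> None)
    \<and> (\<forall>f\<in>set fs. \<sigma> f \<noteq> None \<and> (\<forall>f'\<in>Fo. \<sigma> f' = \<sigma> f \<longrightarrow> f' = f))
    \<and> (\<forall>m\<in>set ms. \<sigma> m \<noteq> None \<and> (\<forall>m'\<in>Me. \<sigma> m' = \<sigma> m \<longrightarrow> m' = m))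
    \<and> (\<forall>j\<in>{1..K}. fields_of \<sigma> \<alpha> (sp j) = instr_fields \<sigma> fld sp K j (P ! (j - 1)))
    \<and> fields_of \<sigma> \<alpha> (sp (K+1)) = stop_fields fld
    \<and> fields_of \<sigma> \<alpha> (sp (K+2)) = stop_fields fld"

lemma run_meths_create_spots:
  obtains \<sigma> and \<alpha> :: "nat \<Rightarrow> ('fld \<Rightarrow> nat option option) option"
  where "run_meths Fo Me (map Create created_spots) t_init = St \<sigma> \<alpha>"
    and "inj_on \<sigma> (set created_spots)"
    and "\<forall>x\<in>set created_spots. \<exists>a. \<sigma> x = Some a \<and> \<alpha> a = Some (\<lambda>_. None)"
    and "\<forall>x. x \<notin> set created_spots \<longrightarrow> \<sigma> x = None"
proof -
  obtain g and \<alpha> :: "nat \<Rightarrow> ('fld \<Rightarrow> nat option option) option"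
    where run: "run_meths Fo Me (map Create created_spots) t_init =
      St (\<lambda>x. if x \<in> set created_spots then Some (g x) else None) \<alpha>"
    and "inj_on g (set created_spots)" "\<forall>x\<in>set created_spots. \<alpha> (g x) = Some (\<lambda>_. None)"
    using run_meths_Create[OF distinct_created_spots, of "\<lambda>_. None" Fo Me "\<lambda>_. None"]
    unfolding t_init_def by auto
  then show ?thesis
    by (intro that[OF run]) (auto simp: inj_on_def)
qed

lemma inj_on_sp_atoms:
  assumes "inj_on \<sigma> (set created_spots)" "\<forall>x\<in>set created_spots. \<sigma> x \<noteq> None"
  shows "inj_on (\<lambda>j. the (\<sigma> (sp j))) {1..K+2}"
proof (rule inj_onI)
  fix i j assume i: "i \<in> {1..K+2}" and j: "j \<in> {1..K+2}" and eq: "the (\<sigma> (sp i)) = the (\<sigma> (sp j))"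
  moreover have "\<sigma> (sp i) \<noteq> None" "\<sigma> (sp j) \<noteq> None" using assms(2) i j sp_in_created_spots by auto
  ultimately have "\<sigma> (sp i) = \<sigma> (sp j)" by (intro option.expand) auto
  then have "sp i = sp j" using assms(1) i j sp_in_created_spots by (meson inj_onD)
  moreover have "inj_on sp {1..<K + 3}" using distinct_spots by (simp add: distinct_map)
  ultimately show "i = j" using i j by (auto dest: inj_onD)
qed

lemma run_meths_rho_phase:
  assumes inj: "inj_on \<sigma> (set created_spots)"
    and fresh: "\<forall>x\<in>set created_spots. \<exists>a. \<sigma> x = Some a \<and> \<alpha> a = Some (\<lambda>_. None)"
  obtains \<alpha>' where
    "run_meths Fo Me (concat (map (\<lambda>(j, w). rho fld sp K j w) (zip [1..<K + 1] P))) (St \<sigma> \<alpha>) = St \<sigma> \<alpha>'"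
    "\<forall>j\<in>{1..K}. \<alpha>' (the (\<sigma> (sp j))) = Some (instr_fields \<sigma> fld sp K j (P ! (j - 1)))"
    "\<alpha>' (the (\<sigma> (sp (K+1)))) = Some (\<lambda>_. None)" "\<alpha>' (the (\<sigma> (sp (K+2)))) = Some (\<lambda>_. None)"
proof -
  define xs where "xs = zip [1..<K + 1] P"
  have xs_iff: "(j, w) \<in> set xs \<longleftrightarrow> j \<in> {1..K} \<and> w = P ! (j - 1)" for j w
    unfolding xs_def by (rule mem_zip_upt_iff)
  have inj_atoms: "inj_on (\<lambda>j. the (\<sigma> (sp j))) {1..K+2}"
    using inj_on_sp_atoms inj fresh by blast
  have "\<forall>(j,w)\<in>set xs. \<sigma> (sp j) \<noteq> None \<and> \<alpha> (the (\<sigma> (sp j))) = Some (\<lambda>_. None)"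
    using xs_iff fresh sp_in_created_spots by fastforce
  moreover have "distinct (map (\<lambda>(j,w). the (\<sigma> (sp j))) xs)"
  proof -
    have "map (\<lambda>(j,w). the (\<sigma> (sp j))) xs = map (\<lambda>j. the (\<sigma> (sp j))) (map fst xs)"
      by (simp add: case_prod_beta)
    also have "map fst xs = [1..<K + 1]" unfolding xs_def by (simp del: upt_Suc)
    finally have "map (\<lambda>(j,w). the (\<sigma> (sp j))) xs = map (\<lambda>j. the (\<sigma> (sp j))) [1..<K + 1]" .
    moreover have "inj_on (\<lambda>j. the (\<sigma> (sp j))) (set [1..<K + 1])"
      by (rule inj_on_subset[OF inj_atoms]) auto
    ultimately show ?thesis by (simp add: distinct_map del: upt_Suc)
  qed
  ultimately obtain \<alpha>' where run:
      "run_meths Fo Me (concat (map (\<lambda>(j,u). rho fld sp K j u) xs)) (St \<sigma> \<alpha>) = St \<sigma> \<alpha>'"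
    and changed: "\<forall>(j,w)\<in>set xs. \<alpha>' (the (\<sigma> (sp j))) = Some (instr_fields \<sigma> fld sp K j w)"
    and unchanged: "\<forall>a. a \<notin> (\<lambda>(j,u). the (\<sigma> (sp j))) ` set xs \<longrightarrow> \<alpha>' a = \<alpha> a"
    using run_meths_concat_rho[OF inj_fld] by blast
  have "the (\<sigma> (sp i)) \<notin> (\<lambda>(j,u). the (\<sigma> (sp j))) ` set xs" if "i \<in> {K+1, K+2}" for i
    using that xs_iff inj_onD[OF inj_atoms] by fastforce
  then have "\<alpha>' (the (\<sigma> (sp i))) = Some (\<lambda>_. None)" if "i \<in> {K+1, K+2}" for i
    using that unchanged fresh sp_in_created_spots[of i] by fastforce
  moreover have "\<forall>j\<in>{1..K}. \<alpha>' (the (\<sigma> (sp j))) = Some (instr_fields \<sigma> fld sp K j (P ! (j - 1)))"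
    using changed xs_iff by blast
  ultimately show ?thesis using that run unfolding xs_def by blast
qed

lemma run_md_pgldmd_represents:
  obtains \<sigma> \<alpha> where "run_md Fo Me (pgldmd fld sp s fs ms P) t_init = St (\<sigma>(s := \<sigma> (sp 1))) \<alpha>"
    and "represents \<sigma> \<alpha>"
proof -
  obtain \<sigma> and \<alpha>c :: "nat \<Rightarrow> ('fld \<Rightarrow> nat option option) option"
    where create: "run_meths Fo Me (map Create created_spots) t_init = St \<sigma> \<alpha>c"
    and inj: "inj_on \<sigma> (set created_spots)"
    and fresh: "\<forall>x\<in>set created_spots. \<exists>a. \<sigma> x = Some a \<and> \<alpha>c a = Some (\<lambda>_. None)"
    and outside: "\<forall>x. x \<notin> set created_spots \<longrightarrow> \<sigma> x = None"
    by (rule run_meths_create_spots)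
  obtain \<alpha>1 where rho_run:
      "run_meths Fo Me (concat (map (\<lambda>(j, w). rho fld sp K j w) (zip [1..<K + 1] P))) (St \<sigma> \<alpha>c) = St \<sigma> \<alpha>1"
    and instrs: "\<forall>j\<in>{1..K}. \<alpha>1 (the (\<sigma> (sp j))) = Some (instr_fields \<sigma> fld sp K j (P ! (j - 1)))"
    and stops: "\<alpha>1 (the (\<sigma> (sp (K+1)))) = Some (\<lambda>_. None)" "\<alpha>1 (the (\<sigma> (sp (K+2)))) = Some (\<lambda>_. None)"
    by (rule run_meths_rho_phase[OF inj fresh])
  have some: "\<And>j. j \<in> {1..K+2} \<Longrightarrow> \<sigma> (sp j) = Some (the (\<sigma> (sp j)))"
    using fresh sp_in_created_spots by fastforce
  have inj_atoms: "inj_on (\<lambda>j. the (\<sigma> (sp j))) {1..K+2}"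
    using inj_on_sp_atoms inj fresh by blast
  obtain b1 b2 where b: "\<sigma> (sp (K+1)) = Some b1" "\<sigma> (sp (K+2)) = Some b2"
    using some[of "K+1"] some[of "K+2"] by auto
  have "b1 \<noteq> b2" using inj_onD[OF inj_atoms, of "K+1" "K+2"] b by auto
  moreover have "the (\<sigma> (sp j)) \<noteq> b1 \<and> the (\<sigma> (sp j)) \<noteq> b2" if "j \<in> {1..K}" for j
    using inj_onD[OF inj_atoms, of j "K+1"] inj_onD[OF inj_atoms, of j "K+2"] b that by auto
  ultimately have b_new: "b1 \<noteq> b2" "\<And>j. j \<in> {1..K} \<Longrightarrow> the (\<sigma> (sp j)) \<noteq> b1 \<and> the (\<sigma> (sp j)) \<noteq> b2"
    by blast+
  define \<alpha> where "\<alpha> = \<alpha>1(b1 := Some (stop_fields fld), b2 := Some (stop_fields fld))"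
  have "pgldmd fld sp s fs ms P = map (\<lambda>m. Basic (MD m)) (map Create created_spots)
     @ map (\<lambda>m. Basic (MD m)) (concat (map (\<lambda>(j,u). rho fld sp K j u) (zip [1..<K + 1] P)))
     @ [Basic (MD (Addfield (sp (K + 1)) (fld FStop))), Basic (MD (Addfield (sp (K + 2)) (fld FStop))),
        Basic (MD (Setspot s (sp 1))), Halt]"
    unfolding pgldmd_def created_spots_def Let_def by (simp del: upt_Suc add: o_def)
  then have "run_md Fo Me (pgldmd fld sp s fs ms P) t_init = run_md Fo Me
       [Basic (MD (Addfield (sp (K + 1)) (fld FStop))), Basic (MD (Addfield (sp (K + 2)) (fld FStop))),
        Basic (MD (Setspot s (sp 1))), Halt] (St \<sigma> \<alpha>1)"
    by (simp only: run_md_Basic_MD_append create rho_run)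
  also have "\<dots> = St (\<sigma>(s := \<sigma> (sp 1))) \<alpha>"
    using b stops b_new(1) by (simp add: run_md_def is_field_def fields_of_def \<alpha>_def stop_fields_def)
  finally have run: "run_md Fo Me (pgldmd fld sp s fs ms P) t_init = St (\<sigma>(s := \<sigma> (sp 1))) \<alpha>" .
  have "represents \<sigma> \<alpha>"
    unfolding represents_def
  proof (intro conjI)
    show "\<forall>j\<in>{1..K+2}. \<sigma> (sp j) \<noteq> None" using some by fastforce
    have "x \<in> set created_spots \<Longrightarrow> \<sigma> x \<noteq> None \<and> (\<forall>x'. \<sigma> x' = \<sigma> x \<longrightarrow> x' = x)" for x
      using fresh outside inj by (metis inj_onD option.distinct(1))
    then show "\<forall>f\<in>set fs. \<sigma> f \<noteq> None \<and> (\<forall>f'\<in>Fo. \<sigma> f' = \<sigma> f \<longrightarrow> f' = f)"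
      and "\<forall>m\<in>set ms. \<sigma> m \<noteq> None \<and> (\<forall>m'\<in>Me. \<sigma> m' = \<sigma> m \<longrightarrow> m' = m)"
      unfolding created_spots_def by auto
    show "\<forall>j\<in>{1..K}. fields_of \<sigma> \<alpha> (sp j) = instr_fields \<sigma> fld sp K j (P ! (j - 1))"
    proof
      fix j assume j: "j \<in> {1..K}"
      then obtain a where a: "\<sigma> (sp j) = Some a" using some[of j] by auto
      then show "fields_of \<sigma> \<alpha> (sp j) = instr_fields \<sigma> fld sp K j (P ! (j - 1))"
        using bspec[OF instrs j] b_new(2)[OF j] by (simp add: fields_of_def \<alpha>_def)
    qed
    show "fields_of \<sigma> \<alpha> (sp (K+1)) = stop_fields fld" "fields_of \<sigma> \<alpha> (sp (K+2)) = stop_fields fld"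
      using b b_new(1) by (simp_all add: fields_of_def \<alpha>_def)
  qed
  then show ?thesis using that run by blast
qed

end

section \<open>The PGA translation of a PGLD program\<close>

context pgldmd_rep
begin

definition pgld_pga :: "('s, 'fld) act pga" where
  "pgld_pga = ([], map (\<lambda>(j, w). psi K j w) (zip [1..<K + 1] P) @ [Halt, Halt])"

lemma instr_at_pgld_pga: "1 \<le> i \<Longrightarrow> instr_at pgld_pga i = Some (snd pgld_pga ! ((i - 1) mod (K + 2)))"
  using P_nonempty by (simp add: pgld_pga_def instr_at_def)

lemma instr_at_pgld_pga_instr: "j \<in> {1..K} \<Longrightarrow> instr_at pgld_pga j = Some (psi K j (P ! (j - 1)))"
proof -
  assume j: "j \<in> {1..K}"
  then have jl: "j - 1 < K" "(j - 1) mod (K + 2) = j - 1" by auto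
  have "snd pgld_pga ! (j - 1) = psi K j (P ! (j - 1))"
    unfolding pgld_pga_def using jl j P_nonempty by (simp add: nth_append del: upt_Suc)
  then show ?thesis using instr_at_pgld_pga[of j] j jl by simp
qed

lemma instr_at_pgld_pga_stop: "instr_at pgld_pga (K+1) = Some Halt" "instr_at pgld_pga (K+2) = Some Halt"
proof -
  have "(K + 1 - 1) mod (K + 2) = K" "(K + 2 - 1) mod (K + 2) = K + 1" by auto
  then show "instr_at pgld_pga (K+1) = Some Halt" "instr_at pgld_pga (K+2) = Some Halt"
    using instr_at_pgld_pga[of "K+1"] instr_at_pgld_pga[of "K+2"]
    by (simp_all add: pgld_pga_def nth_append del: upt_Suc)
qed

lemma instr_at_pgld_pga_periodic: "1 \<le> j \<Longrightarrow> instr_at pgld_pga (q * (K + 2) + j) = instr_at pgld_pga j"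
proof -
  assume j: "1 \<le> j"
  have "q * (K + 2) + j - 1 = (j - 1) + q * (K + 2)" using j by simp
  moreover have "(j - 1 + q * (K + 2)) mod (K + 2) = (j - 1) mod (K + 2)" by (rule mod_mult_self1)
  ultimately have "(q * (K + 2) + j - 1) mod (K + 2) = (j - 1) mod (K + 2)" by simp
  then show ?thesis using instr_at_pgld_pga[of j] instr_at_pgld_pga[of "q * (K + 2) + j"] j by simp
qed

lemma approx_pgld_pga_periodic:
  assumes "1 \<le> j" shows "approx pgld_pga n (j + (K + 2)) = approx pgld_pga n j"
proof -
  have "pgld_pga = ([], snd pgld_pga)" "length (snd pgld_pga) = K + 2" "snd pgld_pga \<noteq> []"
    using P_nonempty by (simp_all add: pgld_pga_def)
  then show ?thesis using approx_periodic[of "snd pgld_pga" j n] assms by metis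
qed

text \<open>Absolute jumps outside 1..K are not followed: psi turns them into halts and rho into
  stop atoms.\<close>
definition ajmp_target :: "nat \<Rightarrow> nat option" where
  "ajmp_target j = (if 1 \<le> j \<and> j \<le> K then (case P ! (j - 1) of
        LAJmp l \<Rightarrow> if 1 \<le> l \<and> l \<le> K then Some l else None
      | _ \<Rightarrow> None) else None)"

text \<open>A jump to itself is excluded because psi translates it into the deadlocking #0.\<close>
inductive ajmp_chain_ends :: "nat \<Rightarrow> bool" where
  ajmp_chain_stop: "ajmp_target j = None \<Longrightarrow> ajmp_chain_ends j"
| ajmp_chain_step: "ajmp_target j = Some l \<Longrightarrow> l \<noteq> j \<Longrightarrow> ajmp_chain_ends l \<Longrightarrow> ajmp_chain_ends j"

lemma ajmp_target_SomeD: "ajmp_target j = Some l \<Longrightarrow> j \<in> {1..K} \<and> P ! (j - 1) = LAJmp l \<and> l \<in> {1..K}"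
  by (auto simp: ajmp_target_def split: if_splits pgld_instr.splits)

lemma not_ajmp_chain_ends:
  "\<not> ajmp_chain_ends j \<Longrightarrow> \<exists>l. ajmp_target j = Some l \<and> (l = j \<or> \<not> ajmp_chain_ends l)"
  by (metis not_Some_eq ajmp_chain_ends.intros)

lemma instr_at_pgld_pga_ajmp:
  assumes "ajmp_target j = Some l" "l \<noteq> j" and p: "p = q * (K + 2) + j"
  shows "fwd_jump pgld_pga p \<and> jnext pgld_pga p = (if j < l then q else Suc q) * (K + 2) + l"
proof -
  have J: "j \<in> {1..K}" "P ! (j - 1) = LAJmp l" "l \<in> {1..K}" using ajmp_target_SomeD[OF assms(1)] by auto
  then have "instr_at pgld_pga p = Some (psi K j (LAJmp l))"
    using instr_at_pgld_pga_instr[OF J(1)] instr_at_pgld_pga_periodic[of j q] p by simp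
  then show ?thesis
    using J assms(2) p by (auto simp: psi_def fwd_jump_def jnext_def)
qed

lemma approx_pgld_pga_ajmp:
  assumes "ajmp_target j = Some l" "l \<noteq> j"
  shows "approx pgld_pga (Suc n) j = approx pgld_pga (Suc n) l"
proof -
  have "l \<in> {1..K}" using ajmp_target_SomeD[OF assms(1)] by auto
  moreover have "fwd_jump pgld_pga j" "jnext pgld_pga j = (if j < l then l else l + (K + 2))"
    using instr_at_pgld_pga_ajmp[OF assms, of j 0] by simp_all
  ultimately show ?thesis
    using approx_Suc_jump[of pgld_pga j n] approx_pgld_pga_periodic[of l "Suc n"] by simp
qed

lemma approx_pgld_pga_ajmp_loop:
  assumes "\<not> ajmp_chain_ends j" "j \<in> {1..K+2}"
  shows "approx pgld_pga (Suc n) j = D"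
proof -
  define M where "M = {q * (K + 2) + j0 | q j0. j0 \<in> {1..K+2} \<and> \<not> ajmp_chain_ends j0}"
  have "\<forall>p\<in>M. instr_at pgld_pga p = Some (Jmp 0) \<or> (fwd_jump pgld_pga p \<and> jnext pgld_pga p \<in> M)"
  proof
    fix p assume "p \<in> M"
    then obtain q j0 where p: "p = q * (K + 2) + j0" "j0 \<in> {1..K+2}" "\<not> ajmp_chain_ends j0"
      unfolding M_def by blast
    obtain l where l: "ajmp_target j0 = Some l" "l = j0 \<or> \<not> ajmp_chain_ends l"
      using not_ajmp_chain_ends[OF p(3)] by blast
    have J: "j0 \<in> {1..K}" "P ! (j0 - 1) = LAJmp l" "l \<in> {1..K}" using ajmp_target_SomeD[OF l(1)] by auto
    show "instr_at pgld_pga p = Some (Jmp 0) \<or> (fwd_jump pgld_pga p \<and> jnext pgld_pga p \<in> M)"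
    proof (cases "l = j0")
      case True
      then show ?thesis using instr_at_pgld_pga_instr[OF J(1)] instr_at_pgld_pga_periodic[of j0 q] J p
        by (simp add: psi_def)
    next
      case False
      then have "\<not> ajmp_chain_ends l" "l \<in> {1..K+2}" using l J by auto
      then show ?thesis using instr_at_pgld_pga_ajmp[OF l(1) False p(1)] unfolding M_def by blast
    qed
  qed
  moreover have "j \<in> M" unfolding M_def using assms by force
  ultimately show ?thesis by (rule approx_Suc_eq_D_if_jump_trap)
qed

lemma pgld_beh_eq_pgld_pga: "pgld_beh P = (\<lambda>n. approx pgld_pga n 1)"
  unfolding pgld_beh_def pga_beh_def pgld_pga_def by simp

end

section \<open>The interpreter on a represented program\<close>

locale pgldmd_state = pgldmd_rep Fo Me fld s u v sp P fs ms
  for Fo Me :: "'s::{finite,linorder} set"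
    and fld :: "fname \<Rightarrow> 'fld::finite"
    and s u v :: 's
    and sp :: "nat \<Rightarrow> 's"
    and P :: "('s, 'fld) act pgld_instr list"
    and fs ms :: "'s list" +
  fixes \<sigma> :: "'s \<Rightarrow> nat option" and \<alpha> :: "nat \<Rightarrow> ('fld \<Rightarrow> nat option option) option"
  assumes represents: "represents \<sigma> \<alpha>"
begin

lemma sp_atom: "j \<in> {1..K+2} \<Longrightarrow> \<sigma> (sp j) \<noteq> None"
  using represents unfolding represents_def by blast

lemma focus_atom: "f \<in> set fs \<Longrightarrow> \<sigma> f \<noteq> None" "f \<in> set fs \<Longrightarrow> f' \<in> Fo \<Longrightarrow> \<sigma> f' = \<sigma> f \<Longrightarrow> f' = f"
  using represents unfolding represents_def by blast+

lemma method_atom: "m \<in> set ms \<Longrightarrow> \<sigma> m \<noteq> None" "m \<in> set ms \<Longrightarrow> m' \<in> Me \<Longrightarrow> \<sigma> m' = \<sigma> m \<Longrightarrow> m' = m"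
  using represents unfolding represents_def by blast+

lemma fields_instr: "j \<in> {1..K} \<Longrightarrow> fields_of \<sigma> \<alpha> (sp j) = instr_fields \<sigma> fld sp K j (P ! (j - 1))"
  using represents unfolding represents_def by blast

lemma fields_stop: "fields_of \<sigma> \<alpha> (sp (K+1)) = stop_fields fld" "fields_of \<sigma> \<alpha> (sp (K+2)) = stop_fields fld"
  using represents unfolding represents_def by blast+

abbreviation interp_prog :: "('s, 'fld) act pga" where
  "interp_prog \<equiv> interp fld s u v"

definition interp_from :: "nat \<Rightarrow> ('s, 'fld) mdstate \<Rightarrow> ('s, 'fld) act thread" where
  "interp_from i t = (\<lambda>m. proj m (use_fin Fo Me (approx interp_prog m i) t))"

definition at_instr :: "nat \<Rightarrow> nat option \<Rightarrow> nat option \<Rightarrow> ('s, 'fld) mdstate" where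
  "at_instr j x y = St (\<sigma>(s := \<sigma> (sp j), u := x, v := y)) \<alpha>"

lemma instr_at_interp:
  "instr_at interp_prog 1 = Some (Pos (MD (Hasfield s (fld FStop))))"
  "instr_at interp_prog (Suc 0) = Some (Pos (MD (Hasfield s (fld FStop))))"
  "instr_at interp_prog 2 = Some Halt"
  "instr_at interp_prog 3 = Some (Pos (MD (Hasfield s (fld FAjmp))))"
  "instr_at interp_prog 4 = Some (Jmp 9)"
  "instr_at interp_prog 5 = Some (Basic (MD (Getfield u s (fld FFocus))))"
  "instr_at interp_prog 6 = Some (Basic (MD (Getfield v s (fld FMethod))))"
  "instr_at interp_prog 7 = Some (Pos (MD (Genact u v)))"
  "instr_at interp_prog 8 = Some (Jmp 3)"
  "instr_at interp_prog 9 = Some (Basic (MD (Getfield s s (fld FNeg))))"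
  "instr_at interp_prog 10 = Some (Jmp 4)"
  "instr_at interp_prog 11 = Some (Basic (MD (Getfield s s (fld FPos))))"
  "instr_at interp_prog 12 = Some (Jmp 2)"
  "instr_at interp_prog 13 = Some (Basic (MD (Getfield s s (fld FAjmp))))"
  by (simp_all add: interp_def instr_at_def)

lemma not_fwd_jump_interp:
  "\<not> fwd_jump interp_prog 1" "\<not> fwd_jump interp_prog (Suc 0)" "\<not> fwd_jump interp_prog 2"
  "\<not> fwd_jump interp_prog 3" "\<not> fwd_jump interp_prog 5" "\<not> fwd_jump interp_prog 6"
  "\<not> fwd_jump interp_prog 7" "\<not> fwd_jump interp_prog 9" "\<not> fwd_jump interp_prog 11"
  "\<not> fwd_jump interp_prog 13"
  by (simp_all add: fwd_jump_def instr_at_interp)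

lemma interp_from_Suc_nonjump:
  assumes "\<not> fwd_jump interp_prog i"
  shows "interp_from i t (Suc m) = proj (Suc m) (use_fin Fo Me (case instr_at interp_prog i of
          None \<Rightarrow> D
        | Some Halt \<Rightarrow> S
        | Some (Jmp l) \<Rightarrow> D
        | Some (Basic a) \<Rightarrow> Post (approx interp_prog m (Suc i)) a (approx interp_prog m (Suc i))
        | Some (Pos a) \<Rightarrow> Post (approx interp_prog m (Suc i)) a (approx interp_prog m (Suc (Suc i)))
        | Some (Neg a) \<Rightarrow> Post (approx interp_prog m (Suc (Suc i))) a (approx interp_prog m (Suc i))) t)"
  unfolding interp_from_def approx_Suc_nonjump[OF assms] by simp

lemma interp_from_jump:
  assumes "fwd_jump interp_prog i"
  shows "interp_from i t = interp_from (jnext interp_prog i) t"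
proof
  fix m show "interp_from i t m = interp_from (jnext interp_prog i) t m"
    unfolding interp_from_def by (cases m) (simp_all add: approx_Suc_jump[OF assms])
qed

lemma interp_from_14: "interp_from 14 t = interp_from 1 t"
proof -
  have "approx interp_prog m (1 + length (snd interp_prog)) = approx interp_prog m 1" for m
    using approx_periodic[of "snd interp_prog" 1 m] by (simp add: interp_def)
  moreover have "length (snd interp_prog) = 13" by (simp add: interp_def)
  ultimately show ?thesis unfolding interp_from_def by simp
qed

lemma interp_from_jumps:
  "interp_from 4 t = interp_from 13 t" "interp_from 8 t = interp_from 11 t"
  "interp_from 10 t = interp_from 1 t" "interp_from 12 t = interp_from 1 t"
  by (subst interp_from_jump; simp add: fwd_jump_def jnext_def instr_at_interp interp_from_14)+

lemma fields_of_at_instr_s: "fields_of (\<sigma>(s := \<sigma> (sp j), u := x, v := y)) \<alpha> s = fields_of \<sigma> \<alpha> (sp j)"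
  using s_u_v_fresh by (simp add: fields_of_def)

lemma at_instr_upd:
  "(\<sigma>(s := a, u := x, v := y))(u := w) = \<sigma>(s := a, u := w, v := y)"
  "(\<sigma>(s := a, u := x, v := y))(v := w) = \<sigma>(s := a, u := x, v := w)"
  "(\<sigma>(s := a, u := x, v := y))(s := w) = \<sigma>(s := w, u := x, v := y)"
  using s_u_v_fresh by (auto simp: fun_eq_iff)

lemma interp_stop_test: "j \<in> {1..K+2} \<Longrightarrow> interp_from 1 (at_instr j x y) (Suc m) =
    TauP (if fields_of \<sigma> \<alpha> (sp j) (fld FStop) \<noteq> None
          then interp_from 2 (at_instr j x y) m else interp_from 3 (at_instr j x y) m)"
  using sp_atom[of j] s_u_v_fresh
  by (simp add: interp_from_Suc_nonjump not_fwd_jump_interp instr_at_interp at_instr_def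
      is_field_def fields_of_at_instr_s) (simp add: interp_from_def eval_nat_numeral)

lemma interp_halt: "interp_from 2 t (Suc m) = S"
  by (simp add: interp_from_Suc_nonjump not_fwd_jump_interp instr_at_interp)

lemma interp_ajmp_test:
  assumes "j \<in> {1..K+2}"
  shows "interp_from 3 (at_instr j x y) (Suc m) =
    TauP (if fields_of \<sigma> \<alpha> (sp j) (fld FAjmp) \<noteq> None
          then interp_from 13 (at_instr j x y) m else interp_from 5 (at_instr j x y) m)"
proof -
  have "interp_from 3 (at_instr j x y) (Suc m) =
    TauP (if fields_of \<sigma> \<alpha> (sp j) (fld FAjmp) \<noteq> None
          then interp_from 4 (at_instr j x y) m else interp_from 5 (at_instr j x y) m)"
    using sp_atom[OF assms] s_u_v_fresh
    by (simp add: interp_from_Suc_nonjump not_fwd_jump_interp instr_at_interp at_instr_def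
        is_field_def fields_of_at_instr_s) (simp add: interp_from_def eval_nat_numeral)
  then show ?thesis by (simp only: interp_from_jumps(1))
qed

lemma interp_get_focus: "j \<in> {1..K+2} \<Longrightarrow> fields_of \<sigma> \<alpha> (sp j) (fld FFocus) = Some w \<Longrightarrow>
    interp_from 5 (at_instr j x y) (Suc m) = TauP (interp_from 6 (at_instr j w y) m)"
  using sp_atom[of j] s_u_v_fresh
  by (simp add: interp_from_Suc_nonjump not_fwd_jump_interp instr_at_interp at_instr_def
      is_field_def fields_of_at_instr_s at_instr_upd) (simp add: interp_from_def eval_nat_numeral)

lemma interp_get_method: "j \<in> {1..K+2} \<Longrightarrow> fields_of \<sigma> \<alpha> (sp j) (fld FMethod) = Some w \<Longrightarrow>
    interp_from 6 (at_instr j x y) (Suc m) = TauP (interp_from 7 (at_instr j x w) m)"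
  using sp_atom[of j] s_u_v_fresh
  by (simp add: interp_from_Suc_nonjump not_fwd_jump_interp instr_at_interp at_instr_def
      is_field_def fields_of_at_instr_s at_instr_upd) (simp add: interp_from_def eval_nat_numeral)

lemma interp_getfield_s:
  assumes "j \<in> {1..K+2}" "fields_of \<sigma> \<alpha> (sp j) fl = Some (\<sigma> (sp q))"
    and "instr_at interp_prog i = Some (Basic (MD (Getfield s s fl)))"
  shows "interp_from i (at_instr j x y) (Suc m) = TauP (interp_from (Suc i) (at_instr q x y) m)"
proof -
  have "\<not> fwd_jump interp_prog i" using assms(3) by (simp add: fwd_jump_def)
  then show ?thesis using sp_atom[of j] s_u_v_fresh assms
    by (simp add: interp_from_Suc_nonjump at_instr_def is_field_def fields_of_at_instr_s at_instr_upd)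
      (simp add: interp_from_def eval_nat_numeral)
qed

lemma interp_get_successor:
  assumes "j \<in> {1..K+2}"
  shows "fields_of \<sigma> \<alpha> (sp j) (fld FNeg) = Some (\<sigma> (sp q)) \<Longrightarrow>
      interp_from 9 (at_instr j x y) (Suc m) = TauP (interp_from 1 (at_instr q x y) m)"
    and "fields_of \<sigma> \<alpha> (sp j) (fld FPos) = Some (\<sigma> (sp q)) \<Longrightarrow>
      interp_from 11 (at_instr j x y) (Suc m) = TauP (interp_from 1 (at_instr q x y) m)"
    and "fields_of \<sigma> \<alpha> (sp j) (fld FAjmp) = Some (\<sigma> (sp q)) \<Longrightarrow>
      interp_from 13 (at_instr j x y) (Suc m) = TauP (interp_from 1 (at_instr q x y) m)"
  using interp_getfield_s[OF assms, of _ q _ x y m]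
  by (simp_all add: instr_at_interp interp_from_jumps interp_from_14)

lemma interp_genact:
  assumes f: "f \<in> set fs" and g: "g \<in> set ms"
  shows "interp_from 7 (at_instr j (\<sigma> f) (\<sigma> g)) (Suc m)
    = Post (interp_from 8 (at_instr j (\<sigma> f) (\<sigma> g)) m) (FM f g) (interp_from 9 (at_instr j (\<sigma> f) (\<sigma> g)) m)"
proof -
  let ?\<sigma> = "\<sigma>(s := \<sigma> (sp j), u := \<sigma> f, v := \<sigma> g)"
  have "f \<in> Fo" "g \<in> Me" using f g set_fs_subset set_ms_subset by auto
  then have "\<exists>f'\<in>Fo. ?\<sigma> f' = \<sigma> f" "\<exists>g'\<in>Me. ?\<sigma> g' = \<sigma> g"
    using s_u_v_fresh by (auto intro: bexI[of _ f] bexI[of _ g])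
  moreover have "{f' \<in> Fo. ?\<sigma> f' = ?\<sigma> u} = {f}" "{g' \<in> Me. ?\<sigma> g' = ?\<sigma> v} = {g}"
    using focus_atom[OF f] method_atom[OF g] set_fs_subset set_ms_subset f g s_u_v_fresh by auto
  ultimately show ?thesis
    using focus_atom(1)[OF f] method_atom(1)[OF g] s_u_v_fresh
    by (simp add: interp_from_Suc_nonjump not_fwd_jump_interp instr_at_interp at_instr_def)
      (simp add: interp_from_def eval_nat_numeral)
qed

lemma fields_ajmp:
  "ajmp_target j = Some l \<Longrightarrow> fields_of \<sigma> \<alpha> (sp j) = (\<lambda>_. None)(fld FAjmp := Some (\<sigma> (sp l)))"
  using ajmp_target_SomeD[of j l] fields_instr[of j] by (auto simp: instr_fields_def)

lemma interp_ajmp_steps: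
  assumes "ajmp_target j = Some l"
  shows "\<forall>m. interp_from 1 (at_instr j x y) (Suc m) = TauP (interp_from 3 (at_instr j x y) m)"
    and "\<forall>m. interp_from 3 (at_instr j x y) (Suc m) = TauP (interp_from 13 (at_instr j x y) m)"
    and "\<forall>m. interp_from 13 (at_instr j x y) (Suc m) = TauP (interp_from 1 (at_instr l x y) m)"
proof -
  have j: "j \<in> {1..K+2}" using ajmp_target_SomeD[OF assms] by auto
  note fields = fields_ajmp[OF assms]
  show "\<forall>m. interp_from 1 (at_instr j x y) (Suc m) = TauP (interp_from 3 (at_instr j x y) m)"
    using interp_stop_test[OF j] fields by simp
  show "\<forall>m. interp_from 3 (at_instr j x y) (Suc m) = TauP (interp_from 13 (at_instr j x y) m)"
    using interp_ajmp_test[OF j] fields by simp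
  show "\<forall>m. interp_from 13 (at_instr j x y) (Suc m) = TauP (interp_from 1 (at_instr l x y) m)"
    using interp_get_successor(3)[OF j] fields by simp
qed

lemma tt_interp_ajmp:
  "ajmp_target j = Some l \<Longrightarrow> tt n (interp_from 1 (at_instr j x y)) = tt n (interp_from 1 (at_instr l x y))"
  using interp_ajmp_steps[of j l x y] tt_TauP by metis

lemma tt_interp_stop:
  assumes "j \<in> {1..K+2}" "fields_of \<sigma> \<alpha> (sp j) (fld FStop) \<noteq> None"
  shows "tt (Suc n) (interp_from 1 (at_instr j x y)) = S"
proof -
  have "tt (Suc n) (interp_from 1 (at_instr j x y)) = tt (Suc n) (interp_from 2 (at_instr j x y))"
    by (rule tt_TauP) (use interp_stop_test[OF assms(1)] assms(2) in simp)
  also have "\<dots> = S" by (rule tt_Suc_S) (simp add: interp_halt)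
  finally show ?thesis .
qed

lemma tt_interp_action:
  assumes j: "j \<in> {1..K}" and fields: "fields_of \<sigma> \<alpha> (sp j) = action_fields \<sigma> fld sp f g p q"
    and f: "f \<in> set fs" and g: "g \<in> set ms"
  shows "tt (Suc n) (interp_from 1 (at_instr j x y)) =
    Post (tt n (interp_from 1 (at_instr p (\<sigma> f) (\<sigma> g)))) (FM f g) (tt n (interp_from 1 (at_instr q (\<sigma> f) (\<sigma> g))))"
proof -
  have j': "j \<in> {1..K+2}" using j by auto
  note field = fun_cong[OF fields, unfolded action_fields_def]
  let ?t = "at_instr j (\<sigma> f) (\<sigma> g)"
  have "tt (Suc n) (interp_from 1 (at_instr j x y)) = tt (Suc n) (interp_from 3 (at_instr j x y))"
    by (rule tt_TauP) (use interp_stop_test[OF j'] field in simp)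
  also have "\<dots> = tt (Suc n) (interp_from 5 (at_instr j x y))"
    by (rule tt_TauP) (use interp_ajmp_test[OF j'] field in simp)
  also have "\<dots> = tt (Suc n) (interp_from 6 (at_instr j (\<sigma> f) y))"
    by (rule tt_TauP) (use interp_get_focus[OF j'] field in simp)
  also have "\<dots> = tt (Suc n) (interp_from 7 ?t)"
    by (rule tt_TauP) (use interp_get_method[OF j'] field in simp)
  also have "\<dots> = Post (tt n (interp_from 8 ?t)) (FM f g) (tt n (interp_from 9 ?t))"
    by (rule tt_Suc_Post) (use interp_genact[OF f g] in simp)
  also have "tt n (interp_from 8 ?t) = tt n (interp_from 1 (at_instr p (\<sigma> f) (\<sigma> g)))"
    unfolding interp_from_jumps(2)
    by (rule tt_TauP) (use interp_get_successor(2)[OF j'] field in simp)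
  also have "tt n (interp_from 9 ?t) = tt n (interp_from 1 (at_instr q (\<sigma> f) (\<sigma> g)))"
    by (rule tt_TauP) (use interp_get_successor(1)[OF j'] field in simp)
  finally show ?thesis .
qed

text \<open>An absolute jump cycle only ever visits positions 1, 3 and 13 of the interpreter, each
  by a silent step.\<close>
lemma inf_tau_interp_ajmp_loop:
  assumes "\<not> ajmp_chain_ends j" "j \<in> {1..K+2}"
  shows "inf_tau (interp_from 1 (at_instr j x y))"
proof -
  define M where "M = {interp_from i (at_instr j x y) | i j. i \<in> {1, 3, 13} \<and> j \<in> {1..K+2} \<and> \<not> ajmp_chain_ends j}"
  have "\<forall>p\<in>M. head_tau p \<and> ttail p \<in> M"
  proof
    fix p assume "p \<in> M"
    then obtain i j where p: "p = interp_from i (at_instr j x y)" "i \<in> {1, 3, 13}"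
        "j \<in> {1..K+2}" "\<not> ajmp_chain_ends j"
      unfolding M_def by blast
    obtain l where l: "ajmp_target j = Some l" "l = j \<or> \<not> ajmp_chain_ends l"
      using not_ajmp_chain_ends[OF p(4)] by blast
    have "\<not> ajmp_chain_ends l" "l \<in> {1..K+2}" using l p(4) ajmp_target_SomeD[OF l(1)] by auto
    note steps = interp_ajmp_steps[OF l(1), of x y]
    from p(2) consider "i = 1" | "i = 3" | "i = 13" by blast
    then show "head_tau p \<and> ttail p \<in> M"
    proof cases
      case 1
      then show ?thesis using p head_tau_if_TauP[OF steps(1)] ttail_eq_if_TauP[OF steps(1)]
        unfolding M_def by blast
    next
      case 2
      then show ?thesis using p head_tau_if_TauP[OF steps(2)] ttail_eq_if_TauP[OF steps(2)]
        unfolding M_def by blast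
    next
      case 3
      then show ?thesis using p \<open>\<not> ajmp_chain_ends l\<close> \<open>l \<in> {1..K+2}\<close>
          head_tau_if_TauP[OF steps(3)] ttail_eq_if_TauP[OF steps(3)]
        unfolding M_def by blast
    qed
  qed
  moreover have "interp_from 1 (at_instr j x y) \<in> M" unfolding M_def using assms by blast
  ultimately show ?thesis by (rule inf_tau_if_ttail_closed)
qed

section \<open>Simulation\<close>

lemma instr_action_occurs:
  assumes "j \<in> {1..K}" "instr_act (P ! (j - 1)) = Some a"
  obtains f g where "a = FM f g" "f \<in> set fs" "g \<in> set ms"
proof -
  have w: "P ! (j - 1) \<in> set P" using assms(1) by (intro nth_mem) auto
  then obtain f g where a: "a = FM f g" using P_actions assms(2) by blast
  have "f \<in> foci_of P" "g \<in> meths_of P" using w assms(2) a unfolding foci_of_def meths_of_def by blast+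
  then show ?thesis using that a set_fs set_ms by blast
qed

lemma approx_pgld_pga_eq_tt_interp_instr:
  assumes j: "j \<in> {1..K}" and no_ajmp: "ajmp_target j = None"
    and IH1: "\<forall>x y. approx pgld_pga n (j + 1) = tt n (interp_from 1 (at_instr (j + 1) x y))"
    and IH2: "\<forall>x y. approx pgld_pga n (j + 2) = tt n (interp_from 1 (at_instr (j + 2) x y))"
  shows "approx pgld_pga (Suc n) j = tt (Suc n) (interp_from 1 (at_instr j x y))"
proof -
  have instr: "instr_at pgld_pga j = Some (psi K j (P ! (j - 1)))" using instr_at_pgld_pga_instr[OF j] .
  have fields: "fields_of \<sigma> \<alpha> (sp j) = instr_fields \<sigma> fld sp K j (P ! (j - 1))" using fields_instr[OF j] .
  have approx_instr: "approx pgld_pga (Suc n) j = (case psi K j (P ! (j - 1)) of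
        Basic a \<Rightarrow> Post (approx pgld_pga n (Suc j)) a (approx pgld_pga n (Suc j))
      | Pos a \<Rightarrow> Post (approx pgld_pga n (Suc j)) a (approx pgld_pga n (Suc (Suc j)))
      | Neg a \<Rightarrow> Post (approx pgld_pga n (Suc (Suc j))) a (approx pgld_pga n (Suc j))
      | Halt \<Rightarrow> S | Jmp l \<Rightarrow> D)"
    if "\<forall>l. psi K j (P ! (j - 1)) \<noteq> Jmp l"
    using instr that by (subst approx_Suc_nonjump) (auto simp: fwd_jump_def split: pga_instr.split)
  show ?thesis
  proof (cases "P ! (j - 1)")
    case (LAJmp l)
    then have "\<not> (1 \<le> l \<and> l \<le> K)" using no_ajmp j by (auto simp: ajmp_target_def split: if_splits)
    then have "instr_at pgld_pga j = Some Halt" "fields_of \<sigma> \<alpha> (sp j) (fld FStop) \<noteq> None"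
      using instr fields LAJmp j by (auto simp: psi_def instr_fields_def stop_fields_def)
    then show ?thesis using approx_Suc_Halt tt_interp_stop j by simp
  next
    case (LBasic a)
    then obtain f g where "a = FM f g" "f \<in> set fs" "g \<in> set ms"
      using instr_action_occurs[OF j] by (auto simp: instr_act_def)
    then show ?thesis
      using approx_instr LBasic tt_interp_action[OF j _ \<open>f \<in> set fs\<close> \<open>g \<in> set ms\<close>] fields IH1
      by (simp add: psi_def instr_fields_def)
  next
    case (LPos a)
    then obtain f g where "a = FM f g" "f \<in> set fs" "g \<in> set ms"
      using instr_action_occurs[OF j] by (auto simp: instr_act_def)
    then show ?thesis
      using approx_instr LPos tt_interp_action[OF j _ \<open>f \<in> set fs\<close> \<open>g \<in> set ms\<close>] fields IH1 IH2
      by (simp add: psi_def instr_fields_def)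
  next
    case (LNeg a)
    then obtain f g where "a = FM f g" "f \<in> set fs" "g \<in> set ms"
      using instr_action_occurs[OF j] by (auto simp: instr_act_def)
    then show ?thesis
      using approx_instr LNeg tt_interp_action[OF j _ \<open>f \<in> set fs\<close> \<open>g \<in> set ms\<close>] fields IH1 IH2
      by (simp add: psi_def instr_fields_def)
  qed
qed

lemma approx_pgld_pga_eq_tt_interp:
  "\<forall>j\<in>{1..K+2}. \<forall>x y. approx pgld_pga n j = tt n (interp_from 1 (at_instr j x y))"
proof (induction n)
  case 0 show ?case by simp
next
  case (Suc n)
  have "approx pgld_pga (Suc n) j = tt (Suc n) (interp_from 1 (at_instr j x y))"
    if "ajmp_chain_ends j" "j \<in> {1..K+2}" for j x y
    using that
  proof (induction j arbitrary: x y rule: ajmp_chain_ends.induct)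
    case (ajmp_chain_stop j)
    consider "j \<in> {1..K}" | "j = K+1" | "j = K+2" using ajmp_chain_stop.prems by force
    then show ?case
    proof cases
      case 1
      then show ?thesis
        using approx_pgld_pga_eq_tt_interp_instr ajmp_chain_stop.hyps Suc.IH by simp
    next
      case 2
      then show ?thesis using approx_Suc_Halt[OF instr_at_pgld_pga_stop(1)] tt_interp_stop[of j]
          fields_stop ajmp_chain_stop.prems by (simp add: stop_fields_def)
    next
      case 3
      then show ?thesis using approx_Suc_Halt[OF instr_at_pgld_pga_stop(2)] tt_interp_stop[of j]
          fields_stop ajmp_chain_stop.prems by (simp add: stop_fields_def)
    qed
  next
    case (ajmp_chain_step j l)
    have "l \<in> {1..K+2}" using ajmp_target_SomeD[OF ajmp_chain_step.hyps(1)] by auto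
    then show ?case
      using approx_pgld_pga_ajmp[OF ajmp_chain_step.hyps(1,2)] ajmp_chain_step.IH
        tt_interp_ajmp[OF ajmp_chain_step.hyps(1)] by simp
  qed
  then show ?case
    using approx_pgld_pga_ajmp_loop tt_eq_D_if_inf_tau[OF inf_tau_interp_ajmp_loop] by metis
qed

lemma pgld_beh_eq_tau_abs_interp:
  "pgld_beh P = tau_abs (use_md Fo Me (pga_beh interp_prog) (St (\<sigma>(s := \<sigma> (sp 1))) \<alpha>))"
proof -
  have "St (\<sigma>(s := \<sigma> (sp 1))) \<alpha> = at_instr 1 (\<sigma> u) (\<sigma> v)"
    unfolding at_instr_def using s_u_v_fresh by (auto simp: fun_eq_iff)
  moreover have "use_md Fo Me (pga_beh interp_prog) t = interp_from 1 t" for t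
    unfolding use_md_def pga_beh_def interp_from_def by simp
  ultimately show ?thesis
    using approx_pgld_pga_eq_tt_interp by (simp add: pgld_beh_eq_pgld_pga tau_abs_def)
qed

end

theorem theorem1:
  fixes Fo Me :: "'s::{finite,linorder} set"
    and fld :: "fname \<Rightarrow> 'fld::finite"
    and s u v :: 's
    and sp :: "nat \<Rightarrow> 's"
    and P :: "('s, 'fld) act pgld_instr list"
    and fs ms :: "'s list"
  assumes "Fo \<inter> Me = {}"
    and "inj fld"
    and "length P \<ge> 1"
    and "\<forall>w\<in>set P. \<forall>a. instr_act w = Some a \<longrightarrow> (\<exists>f m. a = FM f m \<and> f \<in> Fo \<and> m \<in> Me)"
    and "distinct (s # u # v # map sp [1..<length P + 3])"
    and "\<forall>x\<in>{s, u, v} \<union> sp ` {1..length P + 2}. x \<notin> Fo \<union> Me"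
    and "distinct fs" and "set fs = foci_of P"
    and "distinct ms" and "set ms = meths_of P"
  shows "pgld_beh P =
    tau_abs (use_md Fo Me (pga_beh (interp fld s u v))
                          (run_md Fo Me (pgldmd fld sp s fs ms P) t_init))"
proof -
  interpret pgldmd_rep Fo Me fld s u v sp P fs ms
    using assms by unfold_locales
  obtain \<sigma> \<alpha> where run: "run_md Fo Me (pgldmd fld sp s fs ms P) t_init = St (\<sigma>(s := \<sigma> (sp 1))) \<alpha>"
    and "represents \<sigma> \<alpha>"
    by (rule run_md_pgldmd_represents)
  then interpret pgldmd_state Fo Me fld s u v sp P fs ms \<sigma> \<alpha>
    by unfold_locales
  show ?thesis unfolding run by (rule pgld_beh_eq_tau_abs_interp)
qed

end
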